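(* Let $\mathfrak{X}$ be a Bourgain–Delbaen space determined by $(\Gamma_q,i_q)_q$ and let $\Gamma'$ be a self-determined subset of $\Gamma$. For $q\in\mathbb{N}$ let $\Gamma_q''=\Gamma_q\setminus\Gamma'$. Then for every $q\in\mathbb{N}$, $i_q[\ell_\infty(\Gamma_q'')]=\langle\{d_\gamma:\gamma\in\Gamma_q''\}\rangle$, where $\ell_\infty(\Gamma_q'')$ is naturally identified with a subspace of $\ell_\infty(\Gamma_q)$. In particular, the closed linear span $Y$ of $\{d_\gamma:\gamma\in\Gamma\setminus\Gamma'\}$ is a $\mathscr{L}_\infty$-space.
   Context: Bourgain–Delbaen spaces: $(\Gamma_q)_{q\geqslant1}$ is a strictly increasing sequence of non-empty finite sets, $\Gamma=\bigcup_q\Gamma_q$, and $i_q:\ell_\infty(\Gamma_q)\to\ell_\infty(\Gamma)$ are linear extension operators (i.e. $i_q(x)|_{\Gamma_q}=x$) with $\sup_q\|i_q\|<\infty$, which are compatible: for $p<q$, $i_p=i_q\circ r_q\circ i_p$, where $r_q$ is restriction to $\Gamma_q$. Set $\Delta_1=\Gamma_1$, $\Delta_{q+1}=\Gamma_{q+1}\setminus\Gamma_q$, and for $\gamma\in\Delta_q$ let $d_\gamma=i_q(e_\gamma)$; $\mathfrak{X}$ is the closed span of $\{d_\gamma\}$ in $\ell_\infty(\Gamma)$. For $\gamma\in\Gamma$, $e_\gamma^*$ is evaluation at $\gamma$ restricted to $\mathfrak{X}$ and $(d_\gamma^* )$ are the functionals biorthogonal to $(d_\gamma)$. An infinite subset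 $\Gamma'\subseteq\Gamma$ is self-determined if each $d_\gamma^*$, $\gamma\in\Gamma'$, lies in the linear span of $\{e_\eta^*:\eta\in\Gamma'\}$. A Banach space is a $\mathscr{L}_\infty$-space if for some $\lambda$ every finite-dimensional subspace is contained in a finite-dimensional subspace $F$ that is $\lambda$-isomorphic to $\ell_\infty^{\dim F}$. $\langle\cdot\rangle$ denotes linear span. *)

theory Defs
  imports Complex_Main
begin

text \<open>The index set \<Gamma> is the whole type 'a (so \<Gamma> = UNIV).
 Elements of l_infinity(\<Gamma>) are (bounded) functions 'a \<Rightarrow> real; l_infinity(S) for S \<subseteq> \<Gamma>
 is identified with the functions vanishing outside S. The sets \<Gamma>_q and operators i_q
 are indexed by q \<ge> 1 (values at q = 0 are irrelevant).\<close>

definition supp_in :: "'a set \<Rightarrow> ('a \<Rightarrow> real) \<Rightarrow> bool" where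
  "supp_in S x \<longleftrightarrow> (\<forall>g. g \<notin> S \<longrightarrow> x g = 0)"

definition restr :: "'a set \<Rightarrow> ('a \<Rightarrow> real) \<Rightarrow> ('a \<Rightarrow> real)" where
  "restr S x = (\<lambda>g. if g \<in> S then x g else 0)"

definition unit_vec :: "'a \<Rightarrow> 'a \<Rightarrow> real" where
  "unit_vec g = (\<lambda>h. if h = g then 1 else 0)"

text \<open>sup norm (meaningful for bounded functions)\<close>
definition supnorm :: "('b \<Rightarrow> real) \<Rightarrow> real" where
  "supnorm x = (SUP g. \<bar>x g\<bar>)"

definition bounded_fn :: "('b \<Rightarrow> real) \<Rightarrow> bool" where
  "bounded_fn x \<longleftrightarrow> (\<exists>M. \<forall>g. \<bar>x g\<bar> \<le> M)"

definition lspan :: "('b \<Rightarrow> real) set \<Rightarrow> ('b \<Rightarrow> real) set" where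
  "lspan S = {x. \<exists>F c. finite F \<and> F \<subseteq> S \<and> x = (\<lambda>g. \<Sum>v\<in>F. c v * v g)}"

definition supclosure :: "('b \<Rightarrow> real) set \<Rightarrow> ('b \<Rightarrow> real) set" where
  "supclosure S = {x. bounded_fn x \<and> (\<forall>e>0. \<exists>y\<in>S. \<forall>g. \<bar>x g - y g\<bar> \<le> e)}"

definition Delta :: "(nat \<Rightarrow> 'a set) \<Rightarrow> nat \<Rightarrow> 'a set" where
  "Delta Gam q = Gam q - (\<Union>p\<in>{1..<q}. Gam p)"

definition dvec :: "(nat \<Rightarrow> 'a set) \<Rightarrow> (nat \<Rightarrow> ('a \<Rightarrow> real) \<Rightarrow> ('a \<Rightarrow> real)) \<Rightarrow> 'a \<Rightarrow> ('a \<Rightarrow> real)" where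
  "dvec Gam i g = i (THE q. 1 \<le> q \<and> g \<in> Delta Gam q) (unit_vec g)"

definition BDspace :: "(nat \<Rightarrow> 'a set) \<Rightarrow> (nat \<Rightarrow> ('a \<Rightarrow> real) \<Rightarrow> ('a \<Rightarrow> real)) \<Rightarrow> ('a \<Rightarrow> real) set" where
  "BDspace Gam i = supclosure (lspan (range (dvec Gam i)))"

definition is_dstar :: "(nat \<Rightarrow> 'a set) \<Rightarrow> (nat \<Rightarrow> ('a \<Rightarrow> real) \<Rightarrow> ('a \<Rightarrow> real)) \<Rightarrow> 'a \<Rightarrow> (('a \<Rightarrow> real) \<Rightarrow> real) \<Rightarrow> bool" where
  "is_dstar Gam i g phi \<longleftrightarrow>
     (\<forall>x\<in>BDspace Gam i. \<forall>y\<in>BDspace Gam i. \<forall>a b::real.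
        phi (\<lambda>h. a * x h + b * y h) = a * phi x + b * phi y) \<and>
     (\<exists>C. \<forall>x\<in>BDspace Gam i. \<bar>phi x\<bar> \<le> C * supnorm x) \<and>
     (\<forall>d. phi (dvec Gam i d) = (if d = g then 1 else 0))"

definition self_determined :: "(nat \<Rightarrow> 'a set) \<Rightarrow> (nat \<Rightarrow> ('a \<Rightarrow> real) \<Rightarrow> ('a \<Rightarrow> real)) \<Rightarrow> 'a set \<Rightarrow> bool" where
  "self_determined Gam i G' \<longleftrightarrow> infinite G' \<and>
     (\<forall>g\<in>G'. \<exists>F c. finite F \<and> F \<subseteq> G' \<and> is_dstar Gam i g (\<lambda>x. \<Sum>h\<in>F. c h * x h))"

definition fin_dim_subspace :: "('b \<Rightarrow> real) set \<Rightarrow> bool" where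
  "fin_dim_subspace E \<longleftrightarrow> (\<exists>B. finite B \<and> E = lspan B)"

text \<open>F is lam-isomorphic to l_infinity^n with n = dim F: a linear bijection T onto
 the vectors supported in {0..<n} with norm(T) * norm(T^-1) \<le> lam\<close>
definition linfty_iso :: "real \<Rightarrow> ('b \<Rightarrow> real) set \<Rightarrow> bool" where
  "linfty_iso lam F \<longleftrightarrow> (\<exists>(n::nat) (T :: ('b \<Rightarrow> real) \<Rightarrow> (nat \<Rightarrow> real)) a b.
      bij_betw T F {v. \<forall>k\<ge>n. v k = 0} \<and>
      (\<forall>x\<in>F. \<forall>y\<in>F. \<forall>s t::real. T (\<lambda>h. s * x h + t * y h) = (\<lambda>k. s * T x k + t * T y k)) \<and>
      a * b \<le> lam \<and>
      (\<forall>x\<in>F. supnorm (T x) \<le> a * supnorm x) \<and>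
      (\<forall>x\<in>F. supnorm x \<le> b * supnorm (T x)))"

definition Linf_space :: "('b \<Rightarrow> real) set \<Rightarrow> bool" where
  "Linf_space Y \<longleftrightarrow> (\<exists>lam. \<forall>E. fin_dim_subspace E \<and> E \<subseteq> Y \<longrightarrow>
      (\<exists>F. fin_dim_subspace F \<and> E \<subseteq> F \<and> F \<subseteq> Y \<and> linfty_iso lam F))"

end

theory Submission
  imports Defs
begin

text \<open>Self-determination of \<open>\<Gamma>'\<close> and the triangular shape of the \<open>d\<^sub>\<gamma>\<close> (\<open>d\<^sub>\<gamma>\<close> vanishes below
  the level of \<open>\<gamma>\<close> and is the unit vector at that level) give \<open>d\<^sub>\<gamma>(\<eta>) = 0\<close> for \<open>\<eta> \<in> \<Gamma>'\<close>,
  \<open>\<gamma> \<notin> \<Gamma>'\<close>, by induction on the level of \<open>\<eta>\<close>. Hence each such \<open>d\<^sub>\<gamma>\<close> is \<open>i\<^sub>q\<close> of a function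
  supported on \<open>\<Gamma>\<^sub>q''\<close>, while conversely the dual functionals \<open>d\<^sup>*\<^sub>\<eta>\<close>, \<open>\<eta> \<in> \<Gamma>'\<close>, kill the
  coefficients at \<open>\<Gamma>'\<close> of \<open>i\<^sub>q\<close> applied to such a function.

  So \<open>Y\<close> is the closure of the increasing union of the spaces \<open>i\<^sub>q[\<ell>\<^sub>\<infinity>(\<Gamma>\<^sub>q'')]\<close>, each
  \<open>C\<close>-isomorphic to some \<open>\<ell>\<^sub>\<infinity>\<^sup>n\<close> with \<open>C = sup\<^sub>q \<parallel>i\<^sub>q\<parallel>\<close>. Given a finite-dimensional \<open>E \<subseteq> Y\<close>
  spanned by \<open>B\<close>, take coordinate functionals on \<open>E\<close> that are combinations of finitely many
  point evaluations, approximate each \<open>v \<in> B\<close> by \<open>i\<^sub>q(v|\<^bsub>\<Gamma>\<^sub>q\<^esub>)\<close> for large \<open>q\<close>, and perturb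
  \<open>i\<^sub>q[\<ell>\<^sub>\<infinity>(\<Gamma>\<^sub>q'')]\<close> by the small operator moving these approximants onto the \<open>v\<close>: the result
  contains \<open>E\<close> and is \<open>4C\<close>-isomorphic to \<open>\<ell>\<^sub>\<infinity>\<^sup>n\<close>.\<close>

lemma abs_le_supnorm: "bounded_fn x \<Longrightarrow> \<bar>x g\<bar> \<le> supnorm x"
  unfolding supnorm_def bounded_fn_def
  by (rule cSUP_upper) (auto simp: bdd_above_def)

lemma supnorm_le: "(\<And>g. \<bar>x g\<bar> \<le> M) \<Longrightarrow> supnorm x \<le> M"
  unfolding supnorm_def by (rule cSUP_least) auto

lemma bounded_fnI: "(\<And>g. \<bar>x g\<bar> \<le> M) \<Longrightarrow> bounded_fn x"
  unfolding bounded_fn_def by blast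

lemma supnorm_nonneg: "bounded_fn x \<Longrightarrow> 0 \<le> supnorm x"
  using abs_le_supnorm[of x undefined] by linarith

lemma bounded_fn_comb:
  assumes "bounded_fn x" "bounded_fn y"
  shows "bounded_fn (\<lambda>g. a * x g + b * y g)"
proof -
  obtain Mx My where M: "\<And>g. \<bar>x g\<bar> \<le> Mx" "\<And>g. \<bar>y g\<bar> \<le> My"
    using assms unfolding bounded_fn_def by blast
  have "\<bar>a * x g + b * y g\<bar> \<le> \<bar>a\<bar> * Mx + \<bar>b\<bar> * My" for g
  proof -
    have "\<bar>a * x g + b * y g\<bar> \<le> \<bar>a\<bar> * \<bar>x g\<bar> + \<bar>b\<bar> * \<bar>y g\<bar>"
      by (metis abs_mult abs_triangle_ineq)
    also have "\<dots> \<le> \<bar>a\<bar> * Mx + \<bar>b\<bar> * My"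
      using M[of g] by (intro add_mono mult_left_mono) auto
    finally show ?thesis .
  qed
  then show ?thesis by (rule bounded_fnI)
qed

lemma supp_in_finite_bounded:
  assumes "finite S" "supp_in S x"
  shows "bounded_fn x"
proof (rule bounded_fnI)
  fix g
  show "\<bar>x g\<bar> \<le> (\<Sum>s\<in>S. \<bar>x s\<bar>)"
    using assms member_le_sum[of g S "\<lambda>s. \<bar>x s\<bar>"] unfolding supp_in_def
    by (cases "g \<in> S") (auto simp: sum_nonneg)
qed

lemma supp_in_sum:
  "(\<And>a. a \<in> A \<Longrightarrow> supp_in S (f a)) \<Longrightarrow> supp_in S (\<lambda>t. \<Sum>a\<in>A. c a * f a t)"
  unfolding supp_in_def by auto

lemma supp_in_unit_vec: "g \<in> S \<Longrightarrow> supp_in S (unit_vec g)"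
  unfolding supp_in_def unit_vec_def by auto

lemma supp_in_restr: "supp_in S (restr S x)"
  unfolding supp_in_def restr_def by auto

lemma supp_in_mono: "supp_in S x \<Longrightarrow> S \<subseteq> T \<Longrightarrow> supp_in T x"
  unfolding supp_in_def by auto

lemma unit_vec_expansion:
  assumes "supp_in S x" "finite S"
  shows "x = (\<lambda>t. \<Sum>\<gamma>\<in>S. x \<gamma> * unit_vec \<gamma> t)"
proof
  fix t
  have "(\<Sum>\<gamma>\<in>S. x \<gamma> * unit_vec \<gamma> t) = (\<Sum>\<gamma>\<in>S. if t = \<gamma> then x \<gamma> else 0)"
    unfolding unit_vec_def by (rule sum.cong) auto
  also have "\<dots> = (if t \<in> S then x t else 0)" using assms(2) by (simp add: sum.delta)
  also have "\<dots> = x t" using assms(1) unfolding supp_in_def by auto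
  finally show "x t = (\<Sum>\<gamma>\<in>S. x \<gamma> * unit_vec \<gamma> t)" by simp
qed

definition lin_closed :: "('b \<Rightarrow> real) set \<Rightarrow> bool" where
  "lin_closed V \<longleftrightarrow> (\<lambda>g. 0) \<in> V \<and> (\<forall>x\<in>V. \<forall>y\<in>V. \<forall>a b. (\<lambda>g. a * x g + b * y g) \<in> V)"

definition lin_on :: "('b \<Rightarrow> real) set \<Rightarrow> (('b \<Rightarrow> real) \<Rightarrow> ('c \<Rightarrow> real)) \<Rightarrow> bool" where
  "lin_on V T \<longleftrightarrow>
     (\<forall>x\<in>V. \<forall>y\<in>V. \<forall>a b. T (\<lambda>g. a * x g + b * y g) = (\<lambda>g. a * T x g + b * T y g))"

lemma lin_closedD: "lin_closed V \<Longrightarrow> x \<in> V \<Longrightarrow> y \<in> V \<Longrightarrow> (\<lambda>g. a * x g + b * y g) \<in> V"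
  unfolding lin_closed_def by blast

lemma lin_closed_zero: "lin_closed V \<Longrightarrow> (\<lambda>g. 0) \<in> V"
  unfolding lin_closed_def by blast

lemma lin_onD:
  "lin_on V T \<Longrightarrow> x \<in> V \<Longrightarrow> y \<in> V \<Longrightarrow> T (\<lambda>g. a * x g + b * y g) = (\<lambda>g. a * T x g + b * T y g)"
  unfolding lin_on_def by blast

lemma lin_closed_sum:
  assumes "lin_closed V" "finite A" "\<And>a. a \<in> A \<Longrightarrow> f a \<in> V"
  shows "(\<lambda>g. \<Sum>a\<in>A. c a * f a g) \<in> V"
  using assms(2,3)
proof (induction A rule: finite_induct)
  case empty then show ?case using lin_closed_zero[OF assms(1)] by simp
next
  case (insert a A)
  have "(\<lambda>g. c a * f a g + 1 * (\<Sum>a\<in>A. c a * f a g)) \<in> V"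
    by (rule lin_closedD[OF assms(1)]) (use insert in auto)
  then show ?case using insert by simp
qed

lemma lin_on_zero: "lin_closed V \<Longrightarrow> lin_on V T \<Longrightarrow> T (\<lambda>g. 0) = (\<lambda>g. 0)"
  using lin_onD[of V T "\<lambda>g. 0" "\<lambda>g. 0" 0 0] lin_closed_zero[of V] by simp

lemma lin_on_sum:
  assumes "lin_closed V" "lin_on V T" "finite A" "\<And>a. a \<in> A \<Longrightarrow> f a \<in> V"
  shows "T (\<lambda>g. \<Sum>a\<in>A. c a * f a g) = (\<lambda>g. \<Sum>a\<in>A. c a * T (f a) g)"
  using assms(3,4)
proof (induction A rule: finite_induct)
  case empty then show ?case using lin_on_zero[OF assms(1,2)] by simp
next
  case (insert a A)
  have "T (\<lambda>g. c a * f a g + 1 * (\<Sum>a\<in>A. c a * f a g))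
      = (\<lambda>g. c a * T (f a) g + 1 * T (\<lambda>g. \<Sum>a\<in>A. c a * f a g) g)"
    by (rule lin_onD[OF assms(2)]) (use insert lin_closed_sum[OF assms(1) insert(1)] in auto)
  then show ?case using insert by simp
qed

lemma lin_closed_image:
  assumes "lin_closed V" "lin_on V T"
  shows "lin_closed (T ` V)"
  unfolding lin_closed_def
proof (intro conjI ballI allI)
  show "(\<lambda>g. 0) \<in> T ` V"
    using lin_on_zero[OF assms] lin_closed_zero[OF assms(1)] by (metis rev_image_eqI)
next
  fix x y a b assume "x \<in> T ` V" "y \<in> T ` V"
  then obtain x' y' where x'y': "x' \<in> V" "y' \<in> V" "x = T x'" "y = T y'" by blast
  then have eq: "(\<lambda>g. a * x g + b * y g) = T (\<lambda>g. a * x' g + b * y' g)"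
    using lin_onD[OF assms(2)] by simp
  have "(\<lambda>g. a * x' g + b * y' g) \<in> V" by (rule lin_closedD[OF assms(1) x'y'(1,2)])
  then show "(\<lambda>g. a * x g + b * y g) \<in> T ` V" unfolding eq by (rule imageI)
qed

lemma lin_closed_supp_in: "lin_closed {x. supp_in S x}"
  unfolding lin_closed_def supp_in_def by auto

lemma lin_closed_supclosure:
  assumes "lin_closed V"
  shows "lin_closed (supclosure V)"
  unfolding lin_closed_def
proof (intro conjI ballI allI)
  show "(\<lambda>g. 0) \<in> supclosure V"
    unfolding supclosure_def using lin_closed_zero[OF assms]
    by (auto intro!: bounded_fnI[of _ 0] bexI[of _ "\<lambda>g. 0"])
next
  fix x y a b assume x: "x \<in> supclosure V" and y: "y \<in> supclosure V"
  have bx: "bounded_fn x" and bY: "bounded_fn y" using x y unfolding supclosure_def by auto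
  have "\<exists>z\<in>V. \<forall>g. \<bar>a * x g + b * y g - z g\<bar> \<le> e" if e: "0 < e" for e
  proof -
    define e' where "e' = e / (\<bar>a\<bar> + \<bar>b\<bar> + 1)"
    have e': "0 < e'" unfolding e'_def using e by (simp add: add_nonneg_pos)
    obtain x' where x': "x' \<in> V" "\<forall>g. \<bar>x g - x' g\<bar> \<le> e'"
      using x e' unfolding supclosure_def by blast
    obtain y' where y': "y' \<in> V" "\<forall>g. \<bar>y g - y' g\<bar> \<le> e'"
      using y e' unfolding supclosure_def by blast
    have "\<bar>a * x g + b * y g - (a * x' g + b * y' g)\<bar> \<le> e" for g
    proof -
      have "\<bar>a * x g + b * y g - (a * x' g + b * y' g)\<bar> = \<bar>a * (x g - x' g) + b * (y g - y' g)\<bar>"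
        by (simp add: algebra_simps)
      also have "\<dots> \<le> \<bar>a\<bar> * \<bar>x g - x' g\<bar> + \<bar>b\<bar> * \<bar>y g - y' g\<bar>"
        by (metis abs_mult abs_triangle_ineq)
      also have "\<dots> \<le> \<bar>a\<bar> * e' + \<bar>b\<bar> * e'"
        using x'(2) y'(2) by (intro add_mono mult_left_mono) auto
      also have "\<dots> \<le> (\<bar>a\<bar> + \<bar>b\<bar> + 1) * e'" using e' by (simp add: algebra_simps)
      also have "\<dots> = e" unfolding e'_def by (simp add: add_nonneg_pos)
      finally show ?thesis .
    qed
    then show ?thesis
      using lin_closedD[OF assms x'(1) y'(1)] by (intro bexI[of _ "\<lambda>g. a * x' g + b * y' g"]) auto
  qed
  then show "(\<lambda>g. a * x g + b * y g) \<in> supclosure V"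
    unfolding supclosure_def using bounded_fn_comb[OF bx bY] by blast
qed

lemma lspan_image_iff:
  "x \<in> lspan (f ` S) \<longleftrightarrow> (\<exists>G a. finite G \<and> G \<subseteq> S \<and> x = (\<lambda>t. \<Sum>\<gamma>\<in>G. a \<gamma> * f \<gamma> t))"
proof
  assume "x \<in> lspan (f ` S)"
  then obtain F c where F: "finite F" "F \<subseteq> f ` S" "x = (\<lambda>g. \<Sum>v\<in>F. c v * v g)"
    unfolding lspan_def by blast
  define G where "G = inv_into S f ` F"
  have inj: "inj_on (inv_into S f) F" using F(2) by (rule inj_on_inv_into)
  have ff: "\<And>v. v \<in> F \<Longrightarrow> f (inv_into S f v) = v" using F(2) by (auto intro: f_inv_into_f)
  have "x = (\<lambda>t. \<Sum>\<gamma>\<in>G. c (f \<gamma>) * f \<gamma> t)"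
  proof
    fix t
    have "(\<Sum>\<gamma>\<in>G. c (f \<gamma>) * f \<gamma> t) = (\<Sum>v\<in>F. c (f (inv_into S f v)) * f (inv_into S f v) t)"
      unfolding G_def by (rule sum.reindex[OF inj, unfolded comp_def])
    also have "\<dots> = (\<Sum>v\<in>F. c v * v t)" by (rule sum.cong) (auto simp: ff)
    finally show "x t = (\<Sum>\<gamma>\<in>G. c (f \<gamma>) * f \<gamma> t)" using F by simp
  qed
  moreover have "finite G" "G \<subseteq> S" using F unfolding G_def by (auto intro: inv_into_into)
  ultimately show "\<exists>G a. finite G \<and> G \<subseteq> S \<and> x = (\<lambda>t. \<Sum>\<gamma>\<in>G. a \<gamma> * f \<gamma> t)"
    by (intro exI[of _ G] exI[of _ "\<lambda>\<gamma>. c (f \<gamma>)"]) simp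
next
  assume "\<exists>G a. finite G \<and> G \<subseteq> S \<and> x = (\<lambda>t. \<Sum>\<gamma>\<in>G. a \<gamma> * f \<gamma> t)"
  then obtain G a where G: "finite G" "G \<subseteq> S" "x = (\<lambda>t. \<Sum>\<gamma>\<in>G. a \<gamma> * f \<gamma> t)" by blast
  define c where "c v = (\<Sum>\<gamma>\<in>{\<gamma>\<in>G. f \<gamma> = v}. a \<gamma>)" for v
  have "x = (\<lambda>t. \<Sum>v\<in>f ` G. c v * v t)"
  proof
    fix t
    have "(\<Sum>\<gamma>\<in>G. a \<gamma> * f \<gamma> t) = (\<Sum>v\<in>f ` G. \<Sum>\<gamma>\<in>{\<gamma>\<in>G. f \<gamma> = v}. a \<gamma> * f \<gamma> t)"
      by (rule sum.image_gen[OF G(1)])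
    also have "\<dots> = (\<Sum>v\<in>f ` G. c v * v t)"
      unfolding c_def sum_distrib_right by (rule sum.cong) auto
    finally show "x t = (\<Sum>v\<in>f ` G. c v * v t)" using G by simp
  qed
  then show "x \<in> lspan (f ` S)" unfolding lspan_def using G
    by (intro CollectI exI[of _ "f ` G"] exI[of _ c]) auto
qed

lemma lspan_finite_iff:
  assumes "finite B"
  shows "x \<in> lspan B \<longleftrightarrow> (\<exists>c. x = (\<lambda>g. \<Sum>v\<in>B. c v * v g))"
proof
  assume "x \<in> lspan B"
  then obtain F c where F: "finite F" "F \<subseteq> B" "x = (\<lambda>g. \<Sum>v\<in>F. c v * v g)"
    unfolding lspan_def by blast
  have "x = (\<lambda>g. \<Sum>v\<in>B. (if v \<in> F then c v else 0) * v g)"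
    unfolding F(3) using assms F(2) by (intro ext sum.mono_neutral_cong_left) auto
  then show "\<exists>c. x = (\<lambda>g. \<Sum>v\<in>B. c v * v g)"
    by (rule exI[of _ "\<lambda>v. if v \<in> F then c v else 0"])
next
  assume "\<exists>c. x = (\<lambda>g. \<Sum>v\<in>B. c v * v g)"
  then obtain c where "x = (\<lambda>g. \<Sum>v\<in>B. c v * v g)" ..
  then show "x \<in> lspan B" unfolding lspan_def using assms by blast
qed

lemma lspan_superset: "v \<in> V \<Longrightarrow> v \<in> lspan V"
  unfolding lspan_def by (intro CollectI exI[of _ "{v}"] exI[of _ "\<lambda>_. 1"]) auto

lemma lspan_mono: "V \<subseteq> W \<Longrightarrow> lspan V \<subseteq> lspan W"
  unfolding lspan_def by blast

lemma lspan_least: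
  assumes "lin_closed W" "V \<subseteq> W"
  shows "lspan V \<subseteq> W"
proof
  fix x assume "x \<in> lspan V"
  then obtain F c where "finite F" "F \<subseteq> V" "x = (\<lambda>g. \<Sum>v\<in>F. c v * v g)"
    unfolding lspan_def by blast
  then show "x \<in> W" using lin_closed_sum[OF assms(1), of F id c] assms(2) by auto
qed

lemma lin_closed_lspan: "lin_closed (lspan V)"
  unfolding lin_closed_def
proof (intro conjI ballI allI)
  show "(\<lambda>g. 0) \<in> lspan V" unfolding lspan_def by (intro CollectI exI[of _ "{}"]) auto
next
  fix x y a b assume "x \<in> lspan V" "y \<in> lspan V"
  then obtain F c F' c' where F: "finite F" "F \<subseteq> V" "x = (\<lambda>g. \<Sum>v\<in>F. c v * v g)"
    and F': "finite F'" "F' \<subseteq> V" "y = (\<lambda>g. \<Sum>v\<in>F'. c' v * v g)"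
    unfolding lspan_def by blast
  have fu: "finite (F \<union> F')" using F F' by auto
  have "x \<in> lspan (F \<union> F')" "y \<in> lspan (F \<union> F')" unfolding lspan_def using F F' by blast+
  then obtain e e' where e: "x = (\<lambda>g. \<Sum>v\<in>F \<union> F'. e v * v g)" "y = (\<lambda>g. \<Sum>v\<in>F \<union> F'. e' v * v g)"
    using lspan_finite_iff[OF fu] by meson
  have "(\<lambda>g. a * x g + b * y g) = (\<lambda>g. \<Sum>v\<in>F \<union> F'. (a * e v + b * e' v) * v g)"
    unfolding e by (simp add: sum_distrib_left sum.distrib distrib_right mult.assoc)
  then have "(\<lambda>g. a * x g + b * y g) \<in> lspan (F \<union> F')"
    unfolding lspan_finite_iff[OF fu] by (rule exI[of _ "\<lambda>v. a * e v + b * e' v"])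
  then show "(\<lambda>g. a * x g + b * y g) \<in> lspan V"
    using lspan_mono[of "F \<union> F'" V] F(2) F'(2) by blast
qed

lemma lspan_insert_decompose:
  assumes "x \<in> lspan (insert w B)"
  obtains x' t where "x' \<in> lspan B" "x = (\<lambda>g. x' g + t * w g)"
proof -
  obtain F c where F: "finite F" "F \<subseteq> insert w B" "x = (\<lambda>g. \<Sum>v\<in>F. c v * v g)"
    using assms unfolding lspan_def by blast
  define x' where "x' = (\<lambda>g. \<Sum>v\<in>F - {w}. c v * v g)"
  have x': "x' \<in> lspan B" unfolding lspan_def x'_def using F by blast
  have "x = (\<lambda>g. x' g + (if w \<in> F then c w else 0) * w g)"
  proof (cases "w \<in> F")
    case True
    then show ?thesis unfolding F(3) x'_def using F(1) by (simp add: sum.remove algebra_simps)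
  qed (simp add: F(3) x'_def)
  with x' show thesis by (rule that)
qed

lemma lin_closed_bounded: "lin_closed {x. bounded_fn x}"
  unfolding lin_closed_def using bounded_fn_comb by (auto intro: bounded_fnI[of _ 0])

lemma lspan_subset_supclosure:
  assumes "\<And>v. v \<in> V \<Longrightarrow> bounded_fn v"
  shows "lspan V \<subseteq> supclosure (lspan V)"
proof
  fix x assume x: "x \<in> lspan V"
  have "lspan V \<subseteq> {x. bounded_fn x}" using assms by (intro lspan_least[OF lin_closed_bounded]) auto
  with x show "x \<in> supclosure (lspan V)" unfolding supclosure_def by (auto intro!: bexI[of _ x])
qed

subsection \<open>Coordinate functionals given by finitely many point evaluations\<close>

definition point_functional :: "'b set \<Rightarrow> (('b \<Rightarrow> real) \<Rightarrow> real) \<Rightarrow> bool" where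
  "point_functional D \<phi> \<longleftrightarrow> (\<exists>a. \<forall>x. \<phi> x = (\<Sum>d\<in>D. a d * x d))"

lemma point_functional_eval:
  assumes "finite D" "d \<in> D"
  shows "point_functional D (\<lambda>x. x d)"
proof -
  have "(\<Sum>d'\<in>D. (if d' = d then 1 else 0) * x d') = x d" for x :: "_ \<Rightarrow> real"
  proof -
    have "(\<Sum>d'\<in>D. (if d' = d then 1 else 0) * x d') = (\<Sum>d'\<in>D. if d = d' then x d' else 0)"
      by (rule sum.cong) auto
    also have "\<dots> = x d" using assms by simp
    finally show ?thesis .
  qed
  then show ?thesis unfolding point_functional_def by metis
qed

lemma point_functional_comb:
  assumes "point_functional D \<phi>" "point_functional D \<psi>"
  shows "point_functional D (\<lambda>x. s * \<phi> x + t * \<psi> x)"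
proof -
  obtain a b where "\<And>x. \<phi> x = (\<Sum>d\<in>D. a d * x d)" "\<And>x. \<psi> x = (\<Sum>d\<in>D. b d * x d)"
    using assms unfolding point_functional_def by blast
  then have "s * \<phi> x + t * \<psi> x = (\<Sum>d\<in>D. (s * a d + t * b d) * x d)" for x
    by (simp add: sum_distrib_left sum.distrib algebra_simps)
  then show ?thesis unfolding point_functional_def by (intro exI[of _ "\<lambda>d. s * a d + t * b d"]) blast
qed

lemma point_functional_sum:
  assumes "finite A" "\<And>v. v \<in> A \<Longrightarrow> point_functional D (\<phi> v)"
  shows "point_functional D (\<lambda>x. \<Sum>v\<in>A. c v * \<phi> v x)"
  using assms
proof (induction A rule: finite_induct)
  case empty
  then show ?case unfolding point_functional_def by (intro exI[of _ "\<lambda>_. 0"]) simp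
next
  case (insert v A)
  have "point_functional D (\<lambda>x. c v * \<phi> v x + 1 * (\<Sum>v\<in>A. c v * \<phi> v x))"
    by (rule point_functional_comb) (use insert in auto)
  then show ?case using insert by simp
qed

lemma point_functional_mono:
  assumes "point_functional D \<phi>" "D \<subseteq> D'" "finite D'"
  shows "point_functional D' \<phi>"
proof -
  obtain a where a: "\<And>x. \<phi> x = (\<Sum>d\<in>D. a d * x d)"
    using assms(1) unfolding point_functional_def by blast
  have "\<phi> x = (\<Sum>d\<in>D'. (if d \<in> D then a d else 0) * x d)" for x
    unfolding a using assms(2,3) by (intro sum.mono_neutral_cong_left) auto
  then show ?thesis unfolding point_functional_def by (intro exI[of _ "\<lambda>d. if d \<in> D then a d else 0"]) blast
qed

lemma point_functional_linear:
  "point_functional D \<phi> \<Longrightarrow> \<phi> (\<lambda>g. a * x g + b * y g) = a * \<phi> x + b * \<phi> y"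
  unfolding point_functional_def by (auto simp: sum_distrib_left sum.distrib algebra_simps)

lemma point_functional_local:
  "point_functional D \<phi> \<Longrightarrow> (\<And>d. d \<in> D \<Longrightarrow> x d = y d) \<Longrightarrow> \<phi> x = \<phi> y"
  unfolding point_functional_def by (auto intro: sum.cong)

lemma point_functionals_uniform_bound:
  assumes "finite B" "\<And>v. v \<in> B \<Longrightarrow> point_functional D (h v)"
  obtains K where "0 \<le> K"
    "\<And>v x M. v \<in> B \<Longrightarrow> (\<And>d. d \<in> D \<Longrightarrow> \<bar>x d\<bar> \<le> M) \<Longrightarrow> 0 \<le> M \<Longrightarrow> \<bar>h v x\<bar> \<le> K * M"
proof -
  obtain a where a: "\<And>v x. v \<in> B \<Longrightarrow> h v x = (\<Sum>d\<in>D. a v d * x d)"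
    using assms(2) unfolding point_functional_def by metis
  define K where "K = (\<Sum>v\<in>B. \<Sum>d\<in>D. \<bar>a v d\<bar>)"
  have "\<bar>h v x\<bar> \<le> K * M"
    if v: "v \<in> B" and M: "\<And>d. d \<in> D \<Longrightarrow> \<bar>x d\<bar> \<le> M" "0 \<le> M" for v x M
  proof -
    have "\<bar>h v x\<bar> \<le> (\<Sum>d\<in>D. \<bar>a v d\<bar> * \<bar>x d\<bar>)"
      unfolding a[OF v] abs_mult[symmetric] by (rule sum_abs)
    also have "\<dots> \<le> (\<Sum>d\<in>D. \<bar>a v d\<bar>) * M"
      unfolding sum_distrib_right using M(1) by (intro sum_mono mult_left_mono) auto
    also have "\<dots> \<le> K * M"
      unfolding K_def using member_le_sum[OF v, of "\<lambda>v. \<Sum>d\<in>D. \<bar>a v d\<bar>"] assms(1) M(2)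
      by (intro mult_right_mono) (auto simp: sum_nonneg)
    finally show ?thesis .
  qed
  moreover have "0 \<le> K" unfolding K_def by (simp add: sum_nonneg)
  ultimately show thesis using that by blast
qed

definition point_coordinates ::
  "('b \<Rightarrow> real) set \<Rightarrow> 'b set \<Rightarrow> (('b \<Rightarrow> real) \<Rightarrow> ('b \<Rightarrow> real) \<Rightarrow> real) \<Rightarrow> bool" where
  "point_coordinates B D h \<longleftrightarrow> finite D \<and> (\<forall>v\<in>B. point_functional D (h v)) \<and>
     (\<forall>x\<in>lspan B. x = (\<lambda>g. \<Sum>v\<in>B. h v x * v g))"

lemma point_coordinates_insert_dependent:
  assumes B: "finite B" "w \<notin> B" and w: "w \<in> lspan B" and h: "point_coordinates B D h"
  shows "point_coordinates (insert w B) D (h(w := (\<lambda>x. 0)))"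
proof -
  have rep: "x = (\<lambda>g. \<Sum>v\<in>B. h v x * v g)" if "x \<in> lspan B" for x
    using h that unfolding point_coordinates_def by blast
  have inB: "x \<in> lspan B" if x: "x \<in> lspan (insert w B)" for x
  proof -
    obtain x' t where "x' \<in> lspan B" "x = (\<lambda>g. x' g + t * w g)"
      using lspan_insert_decompose[OF x] .
    then show ?thesis using lin_closedD[OF lin_closed_lspan _ w, of x' 1 t] by simp
  qed
  have "x = (\<lambda>g. \<Sum>v\<in>insert w B. (h(w := (\<lambda>x. 0))) v x * v g)"
    if x: "x \<in> lspan (insert w B)" for x
  proof -
    note xB = inB[OF x]
    have "(\<Sum>v\<in>insert w B. (h(w := (\<lambda>x. 0))) v x * v g) = (\<Sum>v\<in>B. h v x * v g)" for g
      using B by (auto intro: sum.cong)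
    then show ?thesis using rep[OF xB] by simp
  qed
  moreover have "point_functional D (\<lambda>x. 0)"
    using point_functional_sum[of "{}" D] by simp
  ultimately show ?thesis using h unfolding point_coordinates_def by auto
qed

lemma point_coordinates_insert_independent:
  fixes w :: "'b \<Rightarrow> real"
  assumes B: "finite B" "w \<notin> B" and h: "point_coordinates B D h"
    and d0: "w d0 \<noteq> (\<Sum>v\<in>B. h v w * v d0)"
  defines "r \<equiv> w d0 - (\<Sum>v\<in>B. h v w * v d0)"
  defines "hw \<equiv> \<lambda>x. (x d0 - (\<Sum>v\<in>B. h v x * v d0)) / r"
  shows "point_coordinates (insert w B) (insert d0 D)
           (\<lambda>v. if v = w then hw else (\<lambda>x. h v x - h v w * hw x))"
    (is "point_coordinates _ ?D' ?h'")
proof -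
  have D: "finite D" and hpf: "\<And>v. v \<in> B \<Longrightarrow> point_functional D (h v)"
    and rep: "\<And>x. x \<in> lspan B \<Longrightarrow> x = (\<lambda>g. \<Sum>v\<in>B. h v x * v g)"
    using h unfolding point_coordinates_def by auto
  have r: "r \<noteq> 0" using d0 unfolding r_def by simp
  have pf': "point_functional ?D' (h v)" if "v \<in> B" for v
    using point_functional_mono[OF hpf[OF that]] D by auto
  have "point_functional ?D' (\<lambda>x. (1 / r) * x d0 + (- 1 / r) * (\<Sum>v\<in>B. v d0 * h v x))"
    using D pf' by (intro point_functional_comb point_functional_eval point_functional_sum B(1)) auto
  then have pfw: "point_functional ?D' hw"
    unfolding hw_def by (simp add: diff_divide_distrib mult.commute)
  have "point_functional ?D' (\<lambda>x. 1 * h v x + (- h v w) * hw x)" if "v \<in> B" for v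
    by (intro point_functional_comb pf' that pfw)
  then have pfs: "\<forall>v\<in>insert w B. point_functional ?D' (?h' v)" using pfw by auto
  have "x = (\<lambda>g. \<Sum>v\<in>insert w B. ?h' v x * v g)" if x: "x \<in> lspan (insert w B)" for x
  proof -
    obtain x' t where x': "x' \<in> lspan B" "x = (\<lambda>g. x' g + t * w g)"
      using lspan_insert_decompose[OF x] .
    have hx: "h v x = h v x' + t * h v w" if "v \<in> B" for v
      using point_functional_linear[OF hpf[OF that], of 1 x' t w] x'(2) by simp
    have "(\<Sum>v\<in>B. h v x * v d0) = x' d0 + t * (\<Sum>v\<in>B. h v w * v d0)"
      using fun_cong[OF rep[OF x'(1)], of d0]
      by (simp add: hx sum.distrib sum_distrib_left algebra_simps)
    then have "x d0 - (\<Sum>v\<in>B. h v x * v d0) = t * r"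
      using x'(2) unfolding r_def by (simp add: algebra_simps)
    then have hwx: "hw x = t" unfolding hw_def using r by simp
    show ?thesis
    proof
      fix g
      have "(\<Sum>v\<in>insert w B. ?h' v x * v g) = t * w g + (\<Sum>v\<in>B. h v x' * v g)"
        using B hx hwx by (auto intro!: sum.cong)
      also have "\<dots> = x g"
        using fun_cong[OF rep[OF x'(1)], of g] x'(2) by simp
      finally show "x g = (\<Sum>v\<in>insert w B. ?h' v x * v g)" by simp
    qed
  qed
  then show ?thesis using pfs D unfolding point_coordinates_def by auto
qed

lemma point_coordinates_exist:
  assumes "finite B"
  obtains D h where "point_coordinates B D h"
  using assms
proof (induction B arbitrary: thesis rule: finite_induct)
  case empty
  have "point_coordinates {} {} (\<lambda>v x. 0)" unfolding point_coordinates_def lspan_def by auto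
  then show ?case by (rule empty)
next
  case (insert w B)
  obtain D h where h: "point_coordinates B D h" using insert.IH by blast
  show ?case
  proof (cases "w \<in> lspan B")
    case True
    then show ?thesis
      by (rule insert.prems[OF point_coordinates_insert_dependent[OF insert(1,2) _ h]])
  next
    case False
    have "w \<noteq> (\<lambda>g. \<Sum>v\<in>B. h v w * v g)"
      using False unfolding lspan_finite_iff[OF insert(1)] by (metis (no_types))
    then obtain d0 where "w d0 \<noteq> (\<Sum>v\<in>B. h v w * v d0)" by auto
    then show ?thesis
      by (rule insert.prems[OF point_coordinates_insert_independent[OF insert(1,2) h]])
  qed
qed

subsection \<open>Subspaces isomorphic to finite-dimensional \<open>\<ell>\<^sub>\<infinity>\<close>\<close>

lemma supp_in_lessThan_iff: "supp_in {..<n::nat} w \<longleftrightarrow> (\<forall>k\<ge>n. w k = 0)"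
  unfolding supp_in_def lessThan_iff by (meson not_less)

lemma supnorm_zero: "supnorm (\<lambda>g. 0) = 0"
  unfolding supnorm_def by simp

lemma finite_support_coordinates:
  assumes "finite A"
  obtains n :: nat and E :: "(nat \<Rightarrow> real) \<Rightarrow> ('a \<Rightarrow> real)"
  where "lin_on {w. supp_in {..<n} w} E" "E ` {w. supp_in {..<n} w} = {x. supp_in A x}"
    "\<And>w. supp_in {..<n} w \<Longrightarrow> supnorm (E w) = supnorm w"
proof -
  define n where "n = card A"
  obtain e where e: "bij_betw e {..<n} A"
    using ex_bij_betw_nat_finite[OF assms] unfolding n_def atLeast0LessThan by blast
  define E where "E w = (\<lambda>g. \<Sum>k<n. w k * unit_vec (e k) g)" for w :: "nat \<Rightarrow> real"
  have eA: "k < n \<Longrightarrow> e k \<in> A" for k using e unfolding bij_betw_def by auto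
  have suppE: "supp_in A (E w)" for w
    unfolding E_def by (rule supp_in_sum) (rule supp_in_unit_vec[OF eA], simp)
  have E_at: "E w (e k) = w k" if "k < n" for w k
  proof -
    have "E w (e k) = (\<Sum>k'<n. if k' = k then w k else 0)"
      unfolding E_def unit_vec_def using e that
      by (intro sum.cong) (auto simp: bij_betw_def inj_on_def)
    then show ?thesis using that by simp
  qed
  have lin: "lin_on {w. supp_in {..<n} w} E"
    unfolding lin_on_def E_def by (simp add: sum.distrib sum_distrib_left algebra_simps)
  have "x \<in> E ` {w. supp_in {..<n} w}" if x: "supp_in A x" for x
  proof -
    define w where "w k = (if k < n then x (e k) else 0)" for k
    have "E w g = (\<Sum>a\<in>A. x a * unit_vec a g)" for g
      unfolding E_def w_def using sum.reindex_bij_betw[OF e, of "\<lambda>a. x a * unit_vec a g"]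
      by simp
    then have "E w = (\<lambda>g. \<Sum>a\<in>A. x a * unit_vec a g)" by (rule ext)
    also have "\<dots> = x" using unit_vec_expansion[OF x assms] by simp
    finally have "E w = x" .
    moreover have "supp_in {..<n} w" unfolding supp_in_def w_def by simp
    ultimately show ?thesis by blast
  qed
  then have img: "E ` {w. supp_in {..<n} w} = {x. supp_in A x}" using suppE by auto
  have "supnorm (E w) = supnorm w" if w: "supp_in {..<n} w" for w
  proof (rule antisym)
    have bw: "bounded_fn w" by (rule supp_in_finite_bounded[OF _ w]) simp
    have bE: "bounded_fn (E w)" by (rule supp_in_finite_bounded[OF assms suppE])
    have "\<bar>E w g\<bar> \<le> supnorm w" for g
    proof (cases "\<exists>k<n. g = e k")
      case True
      then show ?thesis using E_at abs_le_supnorm[OF bw] by auto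
    next
      case False
      then have "g \<notin> A" using e unfolding bij_betw_def by auto
      then show ?thesis using suppE supnorm_nonneg[OF bw] unfolding supp_in_def by simp
    qed
    then show "supnorm (E w) \<le> supnorm w" by (rule supnorm_le)
    have "\<bar>w k\<bar> \<le> supnorm (E w)" for k
      using E_at[of k w] abs_le_supnorm[OF bE, of "e k"] w supnorm_nonneg[OF bE]
      unfolding supp_in_def by (cases "k < n") auto
    then show "supnorm w \<le> supnorm (E w)" by (rule supnorm_le)
  qed
  with lin img show thesis by (rule that)
qed

lemma lin_image_supp_lessThan_eq_lspan:
  fixes n :: nat and \<Psi> :: "(nat \<Rightarrow> real) \<Rightarrow> ('a \<Rightarrow> real)"
  defines "V \<equiv> {w. supp_in {..<n} w}"
  assumes lin: "lin_on V \<Psi>"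
  shows "\<Psi> ` V = lspan ((\<lambda>k. \<Psi> (unit_vec k)) ` {..<n})"
proof
  have V: "lin_closed V" unfolding V_def by (rule lin_closed_supp_in)
  have "\<Psi> w \<in> lspan ((\<lambda>k. \<Psi> (unit_vec k)) ` {..<n})" if "w \<in> V" for w
  proof -
    have eq: "w = (\<lambda>j. \<Sum>k\<in>{..<n}. w k * unit_vec k j)"
      using unit_vec_expansion[of "{..<n}" w] that unfolding V_def by simp
    have "\<Psi> (\<lambda>j. \<Sum>k\<in>{..<n}. w k * unit_vec k j) = (\<lambda>g. \<Sum>k\<in>{..<n}. w k * \<Psi> (unit_vec k) g)"
      by (rule lin_on_sum[OF V lin]) (auto simp: V_def supp_in_unit_vec)
    then have "\<Psi> w = (\<lambda>g. \<Sum>k\<in>{..<n}. w k * \<Psi> (unit_vec k) g)"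
      by (subst eq)
    then show ?thesis unfolding lspan_image_iff by blast
  qed
  then show "\<Psi> ` V \<subseteq> lspan ((\<lambda>k. \<Psi> (unit_vec k)) ` {..<n})" by blast
  show "lspan ((\<lambda>k. \<Psi> (unit_vec k)) ` {..<n}) \<subseteq> \<Psi> ` V"
    using supp_in_unit_vec[of _ "{..<n}"]
    by (intro lspan_least lin_closed_image[OF V lin]) (auto simp: V_def)
qed

lemma linfty_iso_image:
  fixes n :: nat and \<Psi> :: "(nat \<Rightarrow> real) \<Rightarrow> ('a \<Rightarrow> real)"
  defines "V \<equiv> {w. supp_in {..<n} w}"
  assumes lin: "lin_on V \<Psi>"
    and lower: "\<And>w. w \<in> V \<Longrightarrow> supnorm w \<le> a * supnorm (\<Psi> w)"
    and upper: "\<And>w. w \<in> V \<Longrightarrow> supnorm (\<Psi> w) \<le> b * supnorm w"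
  shows "linfty_iso (a * b) (\<Psi> ` V)" "fin_dim_subspace (\<Psi> ` V)"
proof -
  have V: "lin_closed V" unfolding V_def by (rule lin_closed_supp_in)
  have inj: "inj_on \<Psi> V"
  proof (rule inj_onI)
    fix w1 w2 assume w: "w1 \<in> V" "w2 \<in> V" "\<Psi> w1 = \<Psi> w2"
    define w where "w = (\<lambda>k. 1 * w1 k + (-1) * w2 k)"
    have wV: "w \<in> V" unfolding w_def by (rule lin_closedD[OF V w(1,2)])
    have "\<Psi> w = (\<lambda>g. 0)" unfolding w_def lin_onD[OF lin w(1,2)] using w(3) by simp
    then have "supnorm w \<le> 0" using lower[OF wV] by (simp add: supnorm_zero)
    moreover have "\<bar>w k\<bar> \<le> supnorm w" for k
      using wV unfolding V_def by (intro abs_le_supnorm supp_in_finite_bounded[of "{..<n}"]) auto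
    ultimately have "w k = 0" for k by (meson abs_le_zero_iff order.trans)
    then show "w1 = w2" unfolding w_def by (simp add: fun_eq_iff)
  qed
  define T where "T = inv_into V \<Psi>"
  have TP: "T (\<Psi> w) = w" if "w \<in> V" for w unfolding T_def by (rule inv_into_f_f[OF inj that])
  have bij: "bij_betw T (\<Psi> ` V) {v. \<forall>k\<ge>n. v k = 0}"
    unfolding T_def using bij_betw_inv_into[OF inj_on_imp_bij_betw[OF inj]]
    by (simp add: V_def supp_in_lessThan_iff)
  have Tlin: "T (\<lambda>g. s * x g + t * y g) = (\<lambda>k. s * T x k + t * T y k)"
    if xy: "x \<in> \<Psi> ` V" "y \<in> \<Psi> ` V" for x y s t
  proof -
    obtain w1 w2 where w: "w1 \<in> V" "w2 \<in> V" "x = \<Psi> w1" "y = \<Psi> w2" using xy by blast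
    have "(\<lambda>g. s * x g + t * y g) = \<Psi> (\<lambda>k. s * w1 k + t * w2 k)"
      unfolding w lin_onD[OF lin w(1,2)] ..
    then show ?thesis using TP[OF lin_closedD[OF V w(1,2)]] TP[OF w(1)] TP[OF w(2)] w by simp
  qed
  show "linfty_iso (a * b) (\<Psi> ` V)"
    unfolding linfty_iso_def using bij Tlin TP lower upper
    by (intro exI[of _ n] exI[of _ T] exI[of _ a] exI[of _ b]) auto
  show "fin_dim_subspace (\<Psi> ` V)"
    using lin_image_supp_lessThan_eq_lspan[OF lin[unfolded V_def]] unfolding fin_dim_subspace_def V_def
    by (intro exI[of _ "(\<lambda>k. \<Psi> (unit_vec k)) ` {..<n}"]) simp
qed

definition perturb ::
  "('b \<Rightarrow> real) set \<Rightarrow> (('b \<Rightarrow> real) \<Rightarrow> ('b \<Rightarrow> real) \<Rightarrow> real) \<Rightarrow> (('b \<Rightarrow> real) \<Rightarrow> ('b \<Rightarrow> real))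
     \<Rightarrow> ('b \<Rightarrow> real) \<Rightarrow> ('b \<Rightarrow> real)" where
  "perturb B h u y = (\<lambda>g. y g + (\<Sum>v\<in>B. h v y * (v g - u v g)))"

lemma perturb_linear:
  assumes "\<And>v. v \<in> B \<Longrightarrow> point_functional D (h v)"
  shows "perturb B h u (\<lambda>g. a * x g + b * y g) = (\<lambda>g. a * perturb B h u x g + b * perturb B h u y g)"
proof -
  have "(\<Sum>v\<in>B. h v (\<lambda>g. a * x g + b * y g) * (v g - u v g))
      = a * (\<Sum>v\<in>B. h v x * (v g - u v g)) + b * (\<Sum>v\<in>B. h v y * (v g - u v g))" for g
    unfolding sum_distrib_left sum.distrib[symmetric]
    by (rule sum.cong) (auto simp: point_functional_linear[OF assms] algebra_simps)
  then show ?thesis unfolding perturb_def by (simp add: algebra_simps)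
qed

lemma perturb_close:
  assumes B: "finite B" and K: "0 \<le> K"
    and hbd: "\<And>v x M. v \<in> B \<Longrightarrow> (\<And>d. d \<in> D \<Longrightarrow> \<bar>x d\<bar> \<le> M) \<Longrightarrow> 0 \<le> M \<Longrightarrow> \<bar>h v x\<bar> \<le> K * M"
    and u: "\<And>v g. v \<in> B \<Longrightarrow> \<bar>v g - u v g\<bar> \<le> \<epsilon>"
    and \<epsilon>: "real (card B) * K * \<epsilon> \<le> 1 / 2"
    and y: "bounded_fn y"
  shows "\<bar>perturb B h u y g - y g\<bar> \<le> supnorm y / 2"
proof -
  have My: "0 \<le> supnorm y" by (rule supnorm_nonneg[OF y])
  have "\<bar>perturb B h u y g - y g\<bar> \<le> (\<Sum>v\<in>B. \<bar>h v y\<bar> * \<bar>v g - u v g\<bar>)"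
    unfolding perturb_def abs_mult[symmetric] by (simp add: sum_abs)
  also have "\<dots> \<le> (\<Sum>v\<in>B. K * supnorm y * \<epsilon>)"
  proof (rule sum_mono)
    fix v assume v: "v \<in> B"
    have "\<bar>h v y\<bar> \<le> K * supnorm y" using hbd[OF v abs_le_supnorm[OF y] My] .
    then show "\<bar>h v y\<bar> * \<bar>v g - u v g\<bar> \<le> K * supnorm y * \<epsilon>"
      using u[OF v] by (intro mult_mono) (auto simp: K My)
  qed
  also have "\<dots> = (real (card B) * K * \<epsilon>) * supnorm y" by simp
  also have "\<dots> \<le> supnorm y / 2" using mult_right_mono[OF \<epsilon> My] by simp
  finally show ?thesis .
qed

lemma perturb_coordinate_comb:
  assumes h: "point_coordinates B D h" and x: "x \<in> lspan B"
    and u: "\<And>v d. v \<in> B \<Longrightarrow> d \<in> D \<Longrightarrow> u v d = v d"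
  shows "perturb B h u (\<lambda>g. \<Sum>v\<in>B. h v x * u v g) = x"
proof -
  have hpf: "\<And>v. v \<in> B \<Longrightarrow> point_functional D (h v)"
    and rep: "x = (\<lambda>g. \<Sum>v\<in>B. h v x * v g)"
    using h x unfolding point_coordinates_def by auto
  have "h v (\<lambda>g. \<Sum>v\<in>B. h v x * u v g) = h v x" if v: "v \<in> B" for v
    using fun_cong[OF rep] u by (intro point_functional_local[OF hpf[OF v]]) simp
  then have "perturb B h u (\<lambda>g. \<Sum>v\<in>B. h v x * u v g) g = (\<Sum>v\<in>B. h v x * v g)" for g
    unfolding perturb_def by (simp add: sum.distrib[symmetric] algebra_simps)
  then have "perturb B h u (\<lambda>g. \<Sum>v\<in>B. h v x * u v g) = (\<lambda>g. \<Sum>v\<in>B. h v x * v g)" by (rule ext)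
  then show ?thesis using rep by simp
qed

lemma perturb_in_lspan:
  assumes "finite B"
  shows "perturb B h u y \<in> lspan (insert y (B \<union> u ` B))"
proof -
  let ?L = "lspan (insert y (B \<union> u ` B))"
  have diff: "(\<lambda>g. v g - u v g) \<in> ?L" if v: "v \<in> B" for v
  proof -
    have "(\<lambda>g. 1 * v g + (-1) * u v g) \<in> ?L"
      using v by (intro lin_closedD[OF lin_closed_lspan] lspan_superset) auto
    then show ?thesis by simp
  qed
  have "(\<lambda>g. \<Sum>v\<in>B. h v y * (v g - u v g)) \<in> ?L"
    using lin_closed_sum[OF lin_closed_lspan assms diff, where c = "\<lambda>v. h v y"] .
  then have "(\<lambda>g. 1 * y g + 1 * (\<Sum>v\<in>B. h v y * (v g - u v g))) \<in> ?L"
    by (intro lin_closedD[OF lin_closed_lspan lspan_superset]) auto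
  then show ?thesis unfolding perturb_def by simp
qed

lemma tolerance_le_half:
  assumes "0 \<le> K"
  shows "real N * K * (1 / (2 * ((K + 1) * (real N + 1)))) \<le> 1 / 2"
proof -
  let ?P = "(K + 1) * (real N + 1)"
  have P: "0 < ?P" using assms by simp
  have "real N * K * (1 / (2 * ?P)) = real N * K / (2 * ?P)" by simp
  also have "\<dots> \<le> ?P / (2 * ?P)"
    using assms P by (intro divide_right_mono) (auto simp: algebra_simps)
  also have "\<dots> = 1 / 2" using P assms by simp
  finally show ?thesis .
qed

lemma linfty_iso_perturbation:
  fixes n :: nat and B :: "('a \<Rightarrow> real) set" and \<Phi> :: "(nat \<Rightarrow> real) \<Rightarrow> ('a \<Rightarrow> real)"
  defines "V \<equiv> {w. supp_in {..<n} w}"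
  assumes B: "finite B" and h: "point_coordinates B D h"
    and K: "0 \<le> K"
    and hbd: "\<And>v x M. v \<in> B \<Longrightarrow> (\<And>d. d \<in> D \<Longrightarrow> \<bar>x d\<bar> \<le> M) \<Longrightarrow> 0 \<le> M \<Longrightarrow> \<bar>h v x\<bar> \<le> K * M"
    and \<Phi>: "lin_on V \<Phi>" "\<And>w. w \<in> V \<Longrightarrow> bounded_fn (\<Phi> w)"
      "\<And>w. w \<in> V \<Longrightarrow> supnorm w \<le> supnorm (\<Phi> w)"
      "\<And>w. w \<in> V \<Longrightarrow> supnorm (\<Phi> w) \<le> C * supnorm w"
    and u: "\<And>v. v \<in> B \<Longrightarrow> u v \<in> \<Phi> ` V" "\<And>v d. v \<in> B \<Longrightarrow> d \<in> D \<Longrightarrow> u v d = v d"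
      "\<And>v g. v \<in> B \<Longrightarrow> \<bar>v g - u v g\<bar> \<le> \<epsilon>"
    and \<epsilon>: "real (card B) * K * \<epsilon> \<le> 1 / 2"
  shows "\<exists>F. fin_dim_subspace F \<and> lspan B \<subseteq> F \<and> F \<subseteq> lspan (B \<union> \<Phi> ` V) \<and> linfty_iso (4 * C) F"
proof -
  have V: "lin_closed V" unfolding V_def by (rule lin_closed_supp_in)
  have hpf: "\<And>v. v \<in> B \<Longrightarrow> point_functional D (h v)"
    using h unfolding point_coordinates_def by auto
  define \<Psi> where "\<Psi> w = perturb B h u (\<Phi> w)" for w
  have lin: "lin_on V \<Psi>"
    unfolding lin_on_def \<Psi>_def using lin_onD[OF \<Phi>(1)] perturb_linear[OF hpf] by simp
  have small: "\<bar>\<Psi> w g - \<Phi> w g\<bar> \<le> supnorm (\<Phi> w) / 2" if "w \<in> V" for w g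
    unfolding \<Psi>_def by (rule perturb_close[where D = D and h = h and u = u, OF B K hbd u(3) \<epsilon> \<Phi>(2)[OF that]])
  have \<Psi>_le: "\<bar>\<Psi> w g\<bar> \<le> 2 * supnorm (\<Phi> w)" if w: "w \<in> V" for w g
    using small[OF w, of g] abs_le_supnorm[OF \<Phi>(2)[OF w], of g] supnorm_nonneg[OF \<Phi>(2)[OF w]]
    by linarith
  have upper: "supnorm (\<Psi> w) \<le> (2 * C) * supnorm w" if w: "w \<in> V" for w
    using supnorm_le[of "\<Psi> w", OF \<Psi>_le[OF w]] \<Phi>(4)[OF w] by linarith
  have lower: "supnorm w \<le> 2 * supnorm (\<Psi> w)" if w: "w \<in> V" for w
  proof -
    have "\<bar>\<Phi> w g\<bar> \<le> supnorm (\<Psi> w) + supnorm (\<Phi> w) / 2" for g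
      using small[OF w, of g] abs_le_supnorm[OF bounded_fnI[of "\<Psi> w", OF \<Psi>_le[OF w]], of g] by linarith
    then have "supnorm (\<Phi> w) \<le> supnorm (\<Psi> w) + supnorm (\<Phi> w) / 2" by (rule supnorm_le)
    then show ?thesis using \<Phi>(3)[OF w] by linarith
  qed
  have "lspan B \<subseteq> \<Psi> ` V"
  proof
    fix x assume x: "x \<in> lspan B"
    have "\<forall>v\<in>B. \<exists>w. w \<in> V \<and> u v = \<Phi> w" using u(1) by blast
    then obtain wv where wv: "\<forall>v\<in>B. wv v \<in> V \<and> u v = \<Phi> (wv v)"
      by (rule bchoice[THEN exE])
    define w where "w = (\<lambda>k. \<Sum>v\<in>B. h v x * wv v k)"
    have wV: "w \<in> V" unfolding w_def using wv by (intro lin_closed_sum[OF V B]) auto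
    have "\<Phi> w = (\<lambda>g. \<Sum>v\<in>B. h v x * u v g)"
      unfolding w_def using lin_on_sum[OF V \<Phi>(1) B, of wv] wv by (simp cong: sum.cong)
    then have "\<Psi> w = x" unfolding \<Psi>_def using perturb_coordinate_comb[where u = u, OF h x u(2)] by simp
    with wV show "x \<in> \<Psi> ` V" by blast
  qed
  moreover have "\<Psi> ` V \<subseteq> lspan (B \<union> \<Phi> ` V)"
  proof
    fix x assume "x \<in> \<Psi> ` V"
    then obtain w where w: "w \<in> V" "x = \<Psi> w" by blast
    have "insert (\<Phi> w) (B \<union> u ` B) \<subseteq> B \<union> \<Phi> ` V" using w(1) u(1) by auto
    then show "x \<in> lspan (B \<union> \<Phi> ` V)"
      using perturb_in_lspan[OF B, of h u "\<Phi> w"] lspan_mono w(2) unfolding \<Psi>_def by blast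
  qed
  moreover have "linfty_iso (2 * (2 * C)) (\<Psi> ` V)" "fin_dim_subspace (\<Psi> ` V)"
    using linfty_iso_image[of n \<Psi> 2 "2 * C"] lin lower upper unfolding V_def by auto
  ultimately show ?thesis by auto
qed

subsection \<open>Bourgain--Delbaen spaces\<close>

locale bourgain_delbaen =
  fixes Gam :: "nat \<Rightarrow> 'a set"
    and i :: "nat \<Rightarrow> ('a \<Rightarrow> real) \<Rightarrow> ('a \<Rightarrow> real)"
  assumes fin: "\<And>q. 1 \<le> q \<Longrightarrow> finite (Gam q) \<and> Gam q \<noteq> {}"
    and incr: "\<And>q. 1 \<le> q \<Longrightarrow> Gam q \<subset> Gam (Suc q)"
    and union: "(\<Union>q\<in>{1..}. Gam q) = UNIV"
    and lin: "\<And>q x y a b. 1 \<le> q \<Longrightarrow> supp_in (Gam q) x \<Longrightarrow> supp_in (Gam q) y \<Longrightarrow>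
               i q (\<lambda>g. a * x g + b * y g) = (\<lambda>g. a * i q x g + b * i q y g)"
    and ext: "\<And>q x g. 1 \<le> q \<Longrightarrow> supp_in (Gam q) x \<Longrightarrow> g \<in> Gam q \<Longrightarrow> i q x g = x g"
    and bnd: "\<exists>C. \<forall>q\<ge>1. \<forall>x. supp_in (Gam q) x \<longrightarrow> supnorm (i q x) \<le> C * supnorm x"
    and bddval: "\<And>q x. 1 \<le> q \<Longrightarrow> supp_in (Gam q) x \<Longrightarrow> bounded_fn (i q x)"
    and compat: "\<And>p q x. 1 \<le> p \<Longrightarrow> p < q \<Longrightarrow> supp_in (Gam p) x \<Longrightarrow>
               i p x = i q (restr (Gam q) (i p x))"
begin

abbreviation d where "d \<equiv> dvec Gam i"

lemma Gam_finite: "1 \<le> q \<Longrightarrow> finite (Gam q)"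
  using fin by blast

lemma Gam_mono:
  assumes "1 \<le> p" "p \<le> q"
  shows "Gam p \<subseteq> Gam q"
  using assms(2)
proof (induction q rule: nat_induct_at_least)
  case (Suc n)
  then show ?case using incr[of n] assms(1) by auto
qed simp

definition level :: "'a \<Rightarrow> nat" where
  "level g = (LEAST q. 1 \<le> q \<and> g \<in> Gam q)"

lemma level_ge_1: "1 \<le> level g" and in_Gam_level: "g \<in> Gam (level g)"
proof -
  have "\<exists>q. 1 \<le> q \<and> g \<in> Gam q" using union by blast
  then show "1 \<le> level g" "g \<in> Gam (level g)" unfolding level_def by (metis (mono_tags) LeastI_ex)+
qed

lemma in_Gam_iff_level: "1 \<le> q \<Longrightarrow> g \<in> Gam q \<longleftrightarrow> level g \<le> q"
proof
  show "1 \<le> q \<Longrightarrow> g \<in> Gam q \<Longrightarrow> level g \<le> q"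
    unfolding level_def by (rule Least_le) simp
  show "level g \<le> q \<Longrightarrow> g \<in> Gam q"
    using Gam_mono[OF level_ge_1] in_Gam_level by blast
qed

lemma in_Delta_iff_level: "1 \<le> q \<Longrightarrow> g \<in> Delta Gam q \<longleftrightarrow> level g = q"
proof -
  assume q: "1 \<le> q"
  have "g \<in> Delta Gam q \<longleftrightarrow> level g \<le> q \<and> (\<forall>p\<in>{1..<q}. \<not> level g \<le> p)"
    unfolding Delta_def using in_Gam_iff_level q by auto
  also have "\<dots> \<longleftrightarrow> level g = q" using level_ge_1[of g] by force
  finally show ?thesis .
qed

lemma dvec_eq: "d g = i (level g) (unit_vec g)"
proof -
  have "(THE q. 1 \<le> q \<and> g \<in> Delta Gam q) = level g"
    by (rule the_equality) (use in_Delta_iff_level level_ge_1 in auto)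
  then show ?thesis unfolding dvec_def by simp
qed

lemma dvec_below_level: "level h < level g \<Longrightarrow> d g h = 0"
  and dvec_same_level: "level h = level g \<Longrightarrow> d g h = (if h = g then 1 else 0)"
proof -
  have "d g h = unit_vec g h" if "level h \<le> level g"
    unfolding dvec_eq using that in_Gam_iff_level[OF level_ge_1]
    by (intro ext[OF level_ge_1 supp_in_unit_vec[OF in_Gam_level]]) auto
  then show "level h < level g \<Longrightarrow> d g h = 0" "level h = level g \<Longrightarrow> d g h = (if h = g then 1 else 0)"
    unfolding unit_vec_def by auto
qed

lemma dvec_self: "d g g = 1"
  using dvec_same_level by simp

lemma lin_on_ext: "1 \<le> q \<Longrightarrow> lin_on {x. supp_in (Gam q) x} (i q)"
  unfolding lin_on_def using lin by blast

lemma ext_sum: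
  assumes "1 \<le> q" "finite A" "\<And>a. a \<in> A \<Longrightarrow> supp_in (Gam q) (f a)"
  shows "i q (\<lambda>t. \<Sum>a\<in>A. c a * f a t) = (\<lambda>t. \<Sum>a\<in>A. c a * i q (f a) t)"
  using lin_on_sum[OF lin_closed_supp_in lin_on_ext] assms by blast

lemma ext_new_level_expansion:
  assumes q: "1 \<le> q" and z: "supp_in (Gam q) z"
    and new: "\<And>\<delta>. \<delta> \<in> Gam q \<Longrightarrow> z \<delta> \<noteq> 0 \<Longrightarrow> level \<delta> = q"
  shows "i q z = (\<lambda>t. \<Sum>\<delta>\<in>Gam q. z \<delta> * d \<delta> t)"
proof -
  have "i q z = i q (\<lambda>t. \<Sum>\<gamma>\<in>Gam q. z \<gamma> * unit_vec \<gamma> t)"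
    using unit_vec_expansion[OF z Gam_finite[OF q]] by simp
  also have "\<dots> = (\<lambda>t. \<Sum>\<gamma>\<in>Gam q. z \<gamma> * i q (unit_vec \<gamma>) t)"
    by (rule ext_sum[OF q Gam_finite[OF q]]) (rule supp_in_unit_vec)
  also have "\<dots> = (\<lambda>t. \<Sum>\<delta>\<in>Gam q. z \<delta> * d \<delta> t)"
  proof -
    have "z \<gamma> * i q (unit_vec \<gamma>) t = z \<gamma> * d \<gamma> t" if "\<gamma> \<in> Gam q" for \<gamma> t
      using new[OF that] unfolding dvec_eq by (cases "z \<gamma> = 0") auto
    then show ?thesis by (auto intro!: sum.cong)
  qed
  finally show ?thesis .
qed

text \<open>Induction on \<open>q\<close>: \<open>x\<close> differs from the restriction to \<open>\<Gamma>\<^sub>q\<^sub>+\<^sub>1\<close> of \<open>i\<^sub>q (x|\<Gamma>\<^sub>q)\<close>,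
  which \<open>i\<^sub>q\<^sub>+\<^sub>1\<close> maps back to \<open>i\<^sub>q (x|\<Gamma>\<^sub>q)\<close> by compatibility, by a function supported on
  \<open>\<Delta>\<^sub>q\<^sub>+\<^sub>1\<close>, on which \<open>i\<^sub>q\<^sub>+\<^sub>1\<close> is given by the \<open>d\<^sub>\<delta>\<close> directly.\<close>
lemma ext_in_dvec_span:
  assumes q: "1 \<le> q"
  shows "supp_in (Gam q) x \<Longrightarrow> \<exists>a. i q x = (\<lambda>t. \<Sum>\<delta>\<in>Gam q. a \<delta> * d \<delta> t)"
  using q
proof (induction q arbitrary: x rule: nat_induct_at_least)
  case base
  have "i 1 x = (\<lambda>t. \<Sum>\<delta>\<in>Gam 1. x \<delta> * d \<delta> t)"
    using base in_Gam_iff_level[of 1] level_ge_1 by (intro ext_new_level_expansion) (auto simp: le_antisym)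
  then show ?case by blast
next
  case (Suc n)
  note n = \<open>1 \<le> n\<close>
  have n1: "1 \<le> Suc n" by simp
  define x1 where "x1 = restr (Gam n) x"
  define w where "w = restr (Gam (Suc n)) (i n x1)"
  define z where "z = (\<lambda>t. w t - x t)"
  have sx1: "supp_in (Gam n) x1" unfolding x1_def by (rule supp_in_restr)
  have sw: "supp_in (Gam (Suc n)) w" unfolding w_def by (rule supp_in_restr)
  have sz: "supp_in (Gam (Suc n)) z" using sw Suc.prems unfolding z_def supp_in_def by auto
  have GnS: "Gam n \<subseteq> Gam (Suc n)" using Gam_mono[OF n] by simp
  have zlev: "level \<delta> = Suc n" if "\<delta> \<in> Gam (Suc n)" "z \<delta> \<noteq> 0" for \<delta>
  proof -
    have "\<delta> \<notin> Gam n"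
    proof
      assume dn: "\<delta> \<in> Gam n"
      have "w \<delta> = x \<delta>" unfolding w_def restr_def using dn GnS ext[OF n sx1 dn]
        by (auto simp: x1_def restr_def)
      then show False using that(2) unfolding z_def by simp
    qed
    then show ?thesis using in_Gam_iff_level[OF n, of \<delta>] in_Gam_iff_level[OF n1, of \<delta>] that(1) by simp
  qed
  have iz: "i (Suc n) z = (\<lambda>t. \<Sum>\<delta>\<in>Gam (Suc n). z \<delta> * d \<delta> t)"
    by (rule ext_new_level_expansion[OF n1 sz zlev])
  have iw: "i (Suc n) w = i n x1"
    unfolding w_def using compat[OF n _ sx1, of "Suc n"] by simp
  obtain a where a: "i n x1 = (\<lambda>t. \<Sum>\<delta>\<in>Gam n. a \<delta> * d \<delta> t)" using Suc.IH[OF sx1] by blast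
  have a': "i n x1 = (\<lambda>t. \<Sum>\<delta>\<in>Gam (Suc n). (if \<delta> \<in> Gam n then a \<delta> else 0) * d \<delta> t)"
    unfolding a using Gam_finite[OF n1] GnS by (intro HOL.ext sum.mono_neutral_cong_left) auto
  have xe: "x = (\<lambda>t. 1 * w t + (-1) * z t)" unfolding z_def by simp
  have "i (Suc n) x = (\<lambda>t. 1 * i (Suc n) w t + (-1) * i (Suc n) z t)"
    by (subst xe, rule lin[OF n1 sw sz])
  also have "\<dots> = (\<lambda>t. \<Sum>\<delta>\<in>Gam (Suc n). ((if \<delta> \<in> Gam n then a \<delta> else 0) - z \<delta>) * d \<delta> t)"
    unfolding iw iz a' by (simp add: sum_subtractf left_diff_distrib)
  finally show ?case by (rule exI[of _ "\<lambda>\<delta>. (if \<delta> \<in> Gam n then a \<delta> else 0) - z \<delta>"])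
qed

lemma ext_restr_dvec:
  assumes q: "1 \<le> q" and lq: "level \<gamma> \<le> q"
  shows "i q (restr (Gam q) (d \<gamma>)) = d \<gamma>"
proof (cases "level \<gamma> < q")
  case True
  then show ?thesis unfolding dvec_eq
    using compat[OF level_ge_1 True supp_in_unit_vec[OF in_Gam_level]] by simp
next
  case False
  then have e: "level \<gamma> = q" using lq by simp
  have "restr (Gam q) (d \<gamma>) = unit_vec \<gamma>"
  proof
    fix t
    show "restr (Gam q) (d \<gamma>) t = unit_vec \<gamma> t"
    proof (cases "t \<in> Gam q")
      case True
      then show ?thesis unfolding restr_def dvec_eq e
        using ext[OF q supp_in_unit_vec[OF in_Gam_level[of \<gamma>, unfolded e]] True] by simp
    next
      case False
      then have "t \<noteq> \<gamma>" using in_Gam_level[of \<gamma>] e by auto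
      then show ?thesis using False unfolding restr_def unit_vec_def by simp
    qed
  qed
  then show ?thesis unfolding dvec_eq e by simp
qed

text \<open>The triangular shape of the \<open>d\<^sub>\<gamma>\<close> forces the coefficients of a combination of evaluations
  dual to \<open>d\<^sub>\<eta>\<close> to vanish above the level of \<open>\<eta>\<close>: a nonzero coefficient of maximal level
  would be detected by the corresponding \<open>d\<^sub>\<zeta>\<close>.\<close>
lemma dual_coeff_vanish_above:
  assumes F: "finite F" and dual: "\<And>\<delta>. (\<Sum>\<zeta>\<in>F. c \<zeta> * d \<delta> \<zeta>) = (if \<delta> = \<eta> then 1 else 0)"
    and z: "\<zeta> \<in> F" "\<zeta> \<noteq> \<eta>" "level \<eta> \<le> level \<zeta>"
  shows "c \<zeta> = 0"
proof (rule ccontr)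
  assume cz: "c \<zeta> \<noteq> 0"
  define B where "B = {\<zeta>\<in>F. \<zeta> \<noteq> \<eta> \<and> level \<eta> \<le> level \<zeta> \<and> c \<zeta> \<noteq> 0}"
  have fB: "finite B" using F unfolding B_def by auto
  have "\<zeta> \<in> B" using z cz unfolding B_def by auto
  then have "Max (level ` B) \<in> level ` B" using fB by (intro Max_in) auto
  then obtain \<zeta>0 where z0: "\<zeta>0 \<in> B" "level \<zeta>0 = Max (level ` B)" by auto
  have max: "level \<zeta>' \<le> level \<zeta>0" if "\<zeta>' \<in> B" for \<zeta>'
    unfolding z0(2) using fB that by simp
  have big: "c \<zeta>' = 0" if "\<zeta>' \<in> F" "level \<zeta>0 < level \<zeta>'" for \<zeta>'
    using that z0(1) max[of \<zeta>'] unfolding B_def by fastforce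
  have "c \<zeta>' * d \<zeta>0 \<zeta>' = (if \<zeta>' = \<zeta>0 then c \<zeta>0 else 0)" if "\<zeta>' \<in> F" for \<zeta>'
  proof -
    consider "\<zeta>' = \<zeta>0" | "level \<zeta>' < level \<zeta>0" | "level \<zeta>' = level \<zeta>0" "\<zeta>' \<noteq> \<zeta>0"
      | "level \<zeta>0 < level \<zeta>'" by linarith
    then show ?thesis
      by cases (use big[OF that] in \<open>auto simp: dvec_self dvec_below_level dvec_same_level\<close>)
  qed
  then have "(\<Sum>\<zeta>'\<in>F. c \<zeta>' * d \<zeta>0 \<zeta>') = c \<zeta>0"
    using z0(1) F unfolding B_def by (simp add: sum.delta' cong: sum.cong)
  moreover have "\<zeta>0 \<noteq> \<eta>" "c \<zeta>0 \<noteq> 0" using z0(1) unfolding B_def by auto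
  ultimately show False using dual[of \<zeta>0] by simp
qed

lemma dual_comb_reduce:
  assumes F: "finite F" and dual: "\<And>\<delta>. (\<Sum>\<zeta>\<in>F. c \<zeta> * d \<delta> \<zeta>) = (if \<delta> = \<eta> then 1 else 0)"
    and low: "\<And>\<zeta>. \<zeta> \<in> F \<Longrightarrow> \<zeta> \<noteq> \<eta> \<Longrightarrow> level \<zeta> < level \<eta> \<Longrightarrow> c \<zeta> * x \<zeta> = 0"
  shows "(\<Sum>\<zeta>\<in>F. c \<zeta> * x \<zeta>) = (if \<eta> \<in> F then c \<eta> * x \<eta> else 0)"
proof -
  have "c \<zeta> * x \<zeta> = (if \<zeta> = \<eta> then c \<eta> * x \<eta> else 0)" if "\<zeta> \<in> F" for \<zeta>
    using low[OF that] dual_coeff_vanish_above[OF F dual that] by (cases "level \<zeta> < level \<eta>") auto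
  then show ?thesis using F by (simp add: sum.delta' cong: sum.cong)
qed

lemma dual_coeff_self:
  assumes F: "finite F" and dual: "\<And>\<delta>. (\<Sum>\<zeta>\<in>F. c \<zeta> * d \<delta> \<zeta>) = (if \<delta> = \<eta> then 1 else 0)"
  shows "\<eta> \<in> F" "c \<eta> = 1"
proof -
  have "(\<Sum>\<zeta>\<in>F. c \<zeta> * d \<eta> \<zeta>) = (if \<eta> \<in> F then c \<eta> * d \<eta> \<eta> else 0)"
    by (rule dual_comb_reduce[OF F dual]) (simp add: dvec_below_level)
  then show "\<eta> \<in> F" "c \<eta> = 1" using dual[of \<eta>] by (simp_all add: dvec_self split: if_splits)
qed

definition ext_bound :: real where
  "ext_bound = max 0 (SOME C. \<forall>q\<ge>1. \<forall>x. supp_in (Gam q) x \<longrightarrow> supnorm (i q x) \<le> C * supnorm x)"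

lemma ext_bound_nonneg: "0 \<le> ext_bound"
  unfolding ext_bound_def by simp

lemma supnorm_ext_le:
  assumes "1 \<le> q" "supp_in (Gam q) x"
  shows "supnorm (i q x) \<le> ext_bound * supnorm x"
proof -
  define C where "C = (SOME C. \<forall>q\<ge>1. \<forall>x. supp_in (Gam q) x \<longrightarrow> supnorm (i q x) \<le> C * supnorm x)"
  have "supnorm (i q x) \<le> C * supnorm x" using someI_ex[OF bnd] assms unfolding C_def by blast
  moreover have "0 \<le> supnorm x"
    using supnorm_nonneg supp_in_finite_bounded Gam_finite assms by blast
  ultimately show ?thesis unfolding ext_bound_def C_def[symmetric]
    by (meson max.cobounded2 mult_right_mono order.trans)
qed

lemma abs_ext_le:
  assumes "1 \<le> q" "supp_in (Gam q) x" "\<And>t. \<bar>x t\<bar> \<le> M"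
  shows "\<bar>i q x g\<bar> \<le> ext_bound * M"
proof -
  have "\<bar>i q x g\<bar> \<le> supnorm (i q x)" by (rule abs_le_supnorm[OF bddval[OF assms(1,2)]])
  also have "\<dots> \<le> ext_bound * supnorm x" by (rule supnorm_ext_le[OF assms(1,2)])
  also have "\<dots> \<le> ext_bound * M"
    using ext_bound_nonneg supnorm_le[OF assms(3)] by (intro mult_left_mono) auto
  finally show ?thesis .
qed

lemma supnorm_le_ext:
  assumes q: "1 \<le> q" and x: "supp_in (Gam q) x"
  shows "supnorm x \<le> supnorm (i q x)"
proof (rule supnorm_le)
  fix g
  have "\<bar>x g\<bar> \<le> \<bar>i q x g\<bar>"
    using ext[OF q x] x unfolding supp_in_def by (cases "g \<in> Gam q") auto
  then show "\<bar>x g\<bar> \<le> supnorm (i q x)" using abs_le_supnorm[OF bddval[OF q x], of g] by linarith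
qed

lemma dvec_bounded: "bounded_fn (d \<gamma>)"
  unfolding dvec_eq by (rule bddval[OF level_ge_1 supp_in_unit_vec[OF in_Gam_level]])

lemma extension_linfty_coordinates:
  assumes q: "1 \<le> q" and A: "A \<subseteq> Gam q"
  obtains n :: nat and \<Phi> :: "(nat \<Rightarrow> real) \<Rightarrow> ('a \<Rightarrow> real)"
  where "lin_on {w. supp_in {..<n} w} \<Phi>" "\<Phi> ` {w. supp_in {..<n} w} = i q ` {x. supp_in A x}"
    "\<And>w. supp_in {..<n} w \<Longrightarrow> bounded_fn (\<Phi> w)"
    "\<And>w. supp_in {..<n} w \<Longrightarrow> supnorm w \<le> supnorm (\<Phi> w)"
    "\<And>w. supp_in {..<n} w \<Longrightarrow> supnorm (\<Phi> w) \<le> ext_bound * supnorm w"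
proof -
  have fA: "finite A" using A Gam_finite[OF q] by (rule finite_subset)
  obtain n and E :: "(nat \<Rightarrow> real) \<Rightarrow> ('a \<Rightarrow> real)"
    where E: "lin_on {w. supp_in {..<n} w} E" "E ` {w. supp_in {..<n} w} = {x. supp_in A x}"
      "\<And>w. supp_in {..<n} w \<Longrightarrow> supnorm (E w) = supnorm w"
    using finite_support_coordinates[OF fA] by blast
  have EG: "supp_in (Gam q) (E w)" if "supp_in {..<n} w" for w
    using E(2) that A supp_in_mono by blast
  have "lin_on {w. supp_in {..<n} w} (\<lambda>w. i q (E w))"
    using E(1) lin_on_ext[OF q] EG unfolding lin_on_def by (auto simp: lin_closed_supp_in[unfolded lin_closed_def])
  moreover have "(\<lambda>w. i q (E w)) ` {w. supp_in {..<n} w} = i q ` {x. supp_in A x}"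
    using E(2) by (metis image_image)
  ultimately show thesis
    using that[of n "\<lambda>w. i q (E w)"] bddval[OF q EG] supnorm_le_ext[OF q EG] supnorm_ext_le[OF q EG] E(3)
    by auto
qed

lemma ext_restr_approx:
  assumes x: "x \<in> supclosure (lspan (d ` S))" and e: "0 < e"
  shows "\<exists>q0\<ge>1. \<forall>q\<ge>q0. \<forall>g. \<bar>i q (restr (Gam q) x) g - x g\<bar> \<le> e"
proof -
  define e' where "e' = e / (ext_bound + 1)"
  have e': "0 < e'" unfolding e'_def using e ext_bound_nonneg by simp
  obtain s where s: "s \<in> lspan (d ` S)" "\<forall>g. \<bar>x g - s g\<bar> \<le> e'"
    using x e' unfolding supclosure_def by blast
  obtain G a where G: "finite G" "s = (\<lambda>t. \<Sum>\<gamma>\<in>G. a \<gamma> * d \<gamma> t)"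
    using s(1) unfolding lspan_image_iff by blast
  define q0 where "q0 = Max (insert 1 (level ` G))"
  have "\<bar>i q (restr (Gam q) x) g - x g\<bar> \<le> e" if qq: "q0 \<le> q" for q g
  proof -
    have q: "1 \<le> q" and lq: "\<And>\<gamma>. \<gamma> \<in> G \<Longrightarrow> level \<gamma> \<le> q"
      using qq G(1) unfolding q0_def by (auto simp: Max_le_iff)
    have "restr (Gam q) s = (\<lambda>t. \<Sum>\<gamma>\<in>G. a \<gamma> * restr (Gam q) (d \<gamma>) t)"
      unfolding G(2) restr_def by auto
    then have "i q (restr (Gam q) s) = (\<lambda>t. \<Sum>\<gamma>\<in>G. a \<gamma> * i q (restr (Gam q) (d \<gamma>)) t)"
      using ext_sum[OF q G(1) supp_in_restr] by simp
    also have "\<dots> = s" unfolding G(2) using ext_restr_dvec[OF q lq] by (auto intro!: sum.cong)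
    finally have fx: "i q (restr (Gam q) s) = s" .
    have "i q (\<lambda>t. 1 * restr (Gam q) x t + (-1) * restr (Gam q) s t)
        = (\<lambda>t. 1 * i q (restr (Gam q) x) t + (-1) * i q (restr (Gam q) s) t)"
      by (rule lin[OF q supp_in_restr supp_in_restr])
    then have "i q (restr (Gam q) x) g - i q (restr (Gam q) s) g
        = i q (\<lambda>t. 1 * restr (Gam q) x t + (-1) * restr (Gam q) s t) g"
      by simp
    also have "\<bar>\<dots>\<bar> \<le> ext_bound * e'"
      using s(2) e' unfolding restr_def
      by (intro abs_ext_le[OF q]) (auto simp: supp_in_def)
    finally have "\<bar>i q (restr (Gam q) x) g - s g\<bar> \<le> ext_bound * e'" using fx by simp
    moreover have "\<bar>s g - x g\<bar> \<le> e'" using s(2) by (simp add: abs_minus_commute)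
    ultimately have "\<bar>i q (restr (Gam q) x) g - x g\<bar> \<le> (ext_bound + 1) * e'"
      by (simp add: algebra_simps)
    also have "\<dots> = e" unfolding e'_def using ext_bound_nonneg by simp
    finally show ?thesis .
  qed
  moreover have "1 \<le> q0" unfolding q0_def using G(1) by simp
  ultimately show ?thesis by blast
qed

lemma ext_restr_approx_uniform:
  assumes B: "finite B" "B \<subseteq> supclosure (lspan (d ` S))" and D: "finite D" and e: "0 < e"
  obtains q where "1 \<le> q" "D \<subseteq> Gam q" "\<And>v g. v \<in> B \<Longrightarrow> \<bar>i q (restr (Gam q) v) g - v g\<bar> \<le> e"
proof -
  have "\<forall>v\<in>B. \<exists>q0. 1 \<le> q0 \<and> (\<forall>q\<ge>q0. \<forall>g. \<bar>i q (restr (Gam q) v) g - v g\<bar> \<le> e)"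
    using ext_restr_approx[OF _ e] B(2) by blast
  then obtain q0 where q0: "\<forall>v\<in>B. 1 \<le> q0 v \<and> (\<forall>q\<ge>q0 v. \<forall>g. \<bar>i q (restr (Gam q) v) g - v g\<bar> \<le> e)"
    by (rule bchoice[THEN exE])
  define q where "q = Max (insert 1 (q0 ` B \<union> level ` D))"
  have fQ: "finite (insert 1 (q0 ` B \<union> level ` D))" using B(1) D by simp
  have q: "1 \<le> q" and qB: "\<And>v. v \<in> B \<Longrightarrow> q0 v \<le> q" and qD: "\<And>\<delta>. \<delta> \<in> D \<Longrightarrow> level \<delta> \<le> q"
    unfolding q_def using fQ by (auto intro: Max_ge)
  show thesis
    using that[OF q] qB q0 in_Gam_iff_level[OF q] qD by blast
qed

end

subsection \<open>Self-determined subsets\<close>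

locale bd_self_determined = bourgain_delbaen +
  fixes G' :: "'a set"
  assumes sd: "self_determined Gam i G'"
begin

lemma self_determined_dual:
  assumes "\<eta> \<in> G'"
  obtains F c where "finite F" "F \<subseteq> G'"
    "\<And>\<delta>. (\<Sum>\<zeta>\<in>F. c \<zeta> * d \<delta> \<zeta>) = (if \<delta> = \<eta> then 1 else 0)"
proof -
  obtain F c where "finite F" "F \<subseteq> G'" "is_dstar Gam i \<eta> (\<lambda>x. \<Sum>h\<in>F. c h * x h)"
    using sd assms unfolding self_determined_def by blast
  then show thesis using that unfolding is_dstar_def by blast
qed

text \<open>Induction on the level of \<open>\<eta>\<close>: by triangularity, \<open>d\<^sup>*\<^sub>\<eta>(d\<^sub>\<gamma>) = d\<^sub>\<gamma>(\<eta>)\<close> plus evaluations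
  of \<open>d\<^sub>\<gamma>\<close> at points of \<open>\<Gamma>'\<close> of lower level, which vanish by induction.\<close>
lemma dvec_vanish_on_self_determined: "\<eta> \<in> G' \<Longrightarrow> \<gamma> \<notin> G' \<Longrightarrow> d \<gamma> \<eta> = 0"
proof (induction "level \<eta>" arbitrary: \<eta> rule: less_induct)
  case less
  obtain F c where F: "finite F" "F \<subseteq> G'"
    and dual: "\<And>\<delta>. (\<Sum>\<zeta>\<in>F. c \<zeta> * d \<delta> \<zeta>) = (if \<delta> = \<eta> then 1 else 0)"
    using self_determined_dual[OF less.prems(1)] by blast
  have "(\<Sum>\<zeta>\<in>F. c \<zeta> * d \<gamma> \<zeta>) = (if \<eta> \<in> F then c \<eta> * d \<gamma> \<eta> else 0)"
  proof (rule dual_comb_reduce[OF F(1) dual])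
    fix \<zeta> assume "\<zeta> \<in> F" "\<zeta> \<noteq> \<eta>" "level \<zeta> < level \<eta>"
    then show "c \<zeta> * d \<gamma> \<zeta> = 0" using less.hyps[of \<zeta>] F(2) less.prems by auto
  qed
  moreover have "\<gamma> \<noteq> \<eta>" using less.prems by auto
  ultimately show ?case using dual[of \<gamma>] dual_coeff_self[OF F(1) dual] by simp
qed

lemma ext_complement_coeff_zero:
  assumes q: "1 \<le> q" and y: "supp_in (Gam q - G') y"
    and a: "i q y = (\<lambda>t. \<Sum>\<delta>\<in>Gam q. a \<delta> * d \<delta> t)"
    and \<delta>: "\<delta> \<in> Gam q" "\<delta> \<in> G'"
  shows "a \<delta> = 0"
proof -
  have yq: "supp_in (Gam q) y" using y supp_in_mono by blast
  obtain F c where F: "finite F" "F \<subseteq> G'"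
    and dual: "\<And>\<delta>'. (\<Sum>\<zeta>\<in>F. c \<zeta> * d \<delta>' \<zeta>) = (if \<delta>' = \<delta> then 1 else 0)"
    using self_determined_dual[OF \<delta>(2)] by blast
  have "(\<Sum>\<zeta>\<in>F. c \<zeta> * i q y \<zeta>) = (\<Sum>\<delta>'\<in>Gam q. a \<delta>' * (\<Sum>\<zeta>\<in>F. c \<zeta> * d \<delta>' \<zeta>))"
    unfolding a by (simp add: sum_distrib_left sum.swap[of _ F] algebra_simps)
  also have "\<dots> = (\<Sum>\<delta>'\<in>Gam q. if \<delta>' = \<delta> then a \<delta> else 0)"
    by (rule sum.cong) (auto simp: dual)
  also have "\<dots> = a \<delta>" using \<delta>(1) Gam_finite[OF q] by simp
  finally have "(\<Sum>\<zeta>\<in>F. c \<zeta> * i q y \<zeta>) = a \<delta>" .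
  moreover have "(\<Sum>\<zeta>\<in>F. c \<zeta> * i q y \<zeta>) = (if \<delta> \<in> F then c \<delta> * i q y \<delta> else 0)"
  proof (rule dual_comb_reduce[OF F(1) dual])
    fix \<zeta> assume z: "\<zeta> \<in> F" "\<zeta> \<noteq> \<delta>" "level \<zeta> < level \<delta>"
    then have "\<zeta> \<in> Gam q" using in_Gam_iff_level[OF q] \<delta>(1) by simp
    then show "c \<zeta> * i q y \<zeta> = 0" using ext[OF q yq] y z F(2) unfolding supp_in_def by auto
  qed
  moreover have "i q y \<delta> = 0" using ext[OF q yq \<delta>(1)] y \<delta>(2) unfolding supp_in_def by auto
  ultimately show ?thesis by (simp split: if_splits)
qed

lemma ext_complement_eq_span:
  assumes q: "1 \<le> q"
  shows "i q ` {x. supp_in (Gam q - G') x} = lspan (d ` (Gam q - G'))"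
proof
  show "i q ` {x. supp_in (Gam q - G') x} \<subseteq> lspan (d ` (Gam q - G'))"
  proof clarify
    fix y assume y: "supp_in (Gam q - G') y"
    obtain a where a: "i q y = (\<lambda>t. \<Sum>\<delta>\<in>Gam q. a \<delta> * d \<delta> t)"
      using ext_in_dvec_span[OF q supp_in_mono[OF y]] by blast
    have "i q y = (\<lambda>t. \<Sum>\<delta>\<in>Gam q - G'. a \<delta> * d \<delta> t)"
      unfolding a using Gam_finite[OF q] ext_complement_coeff_zero[OF q y a]
      by (intro HOL.ext sum.mono_neutral_cong_right) auto
    then show "i q y \<in> lspan (d ` (Gam q - G'))"
      unfolding lspan_image_iff using Gam_finite[OF q] by blast
  qed
next
  show "lspan (d ` (Gam q - G')) \<subseteq> i q ` {x. supp_in (Gam q - G') x}"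
  proof
    fix x assume "x \<in> lspan (d ` (Gam q - G'))"
    then obtain G a where G: "finite G" "G \<subseteq> Gam q - G'" "x = (\<lambda>t. \<Sum>\<gamma>\<in>G. a \<gamma> * d \<gamma> t)"
      unfolding lspan_image_iff by blast
    define y where "y = (\<lambda>t. \<Sum>\<gamma>\<in>G. a \<gamma> * restr (Gam q) (d \<gamma>) t)"
    have sy: "supp_in (Gam q - G') y"
      unfolding supp_in_def y_def restr_def using G(2) dvec_vanish_on_self_determined
      by (auto intro!: sum.neutral)
    have "i q (restr (Gam q) (d \<gamma>)) = d \<gamma>" if "\<gamma> \<in> G" for \<gamma>
      using G(2) that in_Gam_iff_level[OF q, of \<gamma>] ext_restr_dvec[OF q, of \<gamma>] by auto
    then have "i q y = x"
      unfolding y_def G(3) ext_sum[OF q G(1) supp_in_restr] by (auto intro!: sum.cong)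
    then show "x \<in> i q ` {x. supp_in (Gam q - G') x}" using sy by blast
  qed
qed

abbreviation Y where "Y \<equiv> supclosure (lspan (d ` (UNIV - G')))"

lemma lin_closed_Y: "lin_closed Y"
  by (rule lin_closed_supclosure[OF lin_closed_lspan])

lemma Y_vanish:
  assumes x: "x \<in> Y" and \<eta>: "\<eta> \<in> G'"
  shows "x \<eta> = 0"
proof (rule ccontr)
  assume ne: "x \<eta> \<noteq> 0"
  then have "0 < \<bar>x \<eta>\<bar> / 2" by simp
  then obtain y where y: "y \<in> lspan (d ` (UNIV - G'))" "\<forall>g. \<bar>x g - y g\<bar> \<le> \<bar>x \<eta>\<bar> / 2"
    using x unfolding supclosure_def by blast
  have "y \<eta> = 0"
    using y(1) \<eta> dvec_vanish_on_self_determined unfolding lspan_image_iff by (auto intro!: sum.neutral)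
  then have "\<bar>x \<eta>\<bar> \<le> \<bar>x \<eta>\<bar> / 2" using y(2) by (metis diff_zero)
  then show False using ne by simp
qed

lemma ext_complement_subset_Y:
  assumes "1 \<le> q"
  shows "i q ` {x. supp_in (Gam q - G') x} \<subseteq> Y"
proof -
  have "lspan (d ` (Gam q - G')) \<subseteq> lspan (d ` (UNIV - G'))" by (rule lspan_mono) auto
  also have "\<dots> \<subseteq> Y" by (rule lspan_subset_supclosure) (auto simp: dvec_bounded)
  finally show ?thesis unfolding ext_complement_eq_span[OF assms] .
qed

lemma Linf_space_Y: "Linf_space Y"
  unfolding Linf_space_def
proof (intro exI[of _ "4 * ext_bound"] allI impI, elim conjE)
  fix E :: "('a \<Rightarrow> real) set"
  assume "fin_dim_subspace E" and EY: "E \<subseteq> Y"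
  then obtain B where B: "finite B" "E = lspan B" unfolding fin_dim_subspace_def by blast
  have BY: "B \<subseteq> Y" using EY B(2) lspan_superset by blast
  obtain D h where h: "point_coordinates B D h" using point_coordinates_exist[OF B(1)] by blast
  then have D: "finite D" unfolding point_coordinates_def by blast
  obtain K where K: "0 \<le> K"
    and hbd: "\<And>v x M. v \<in> B \<Longrightarrow> (\<And>d. d \<in> D \<Longrightarrow> \<bar>x d\<bar> \<le> M) \<Longrightarrow> 0 \<le> M \<Longrightarrow> \<bar>h v x\<bar> \<le> K * M"
    using point_functionals_uniform_bound[OF B(1), of D h] h unfolding point_coordinates_def by blast
  define \<epsilon> where "\<epsilon> = 1 / (2 * ((K + 1) * (real (card B) + 1)))"
  have "0 < \<epsilon>" unfolding \<epsilon>_def using K by simp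
  then obtain q where q: "1 \<le> q" "D \<subseteq> Gam q"
    and approx: "\<And>v g. v \<in> B \<Longrightarrow> \<bar>i q (restr (Gam q) v) g - v g\<bar> \<le> \<epsilon>"
    using ext_restr_approx_uniform[OF B(1) BY D] by blast
  obtain n :: nat and \<Phi> :: "(nat \<Rightarrow> real) \<Rightarrow> ('a \<Rightarrow> real)"
    where \<Phi>: "lin_on {w. supp_in {..<n} w} \<Phi>"
      "\<Phi> ` {w. supp_in {..<n} w} = i q ` {x. supp_in (Gam q - G') x}"
      "\<And>w. supp_in {..<n} w \<Longrightarrow> bounded_fn (\<Phi> w)"
      "\<And>w. supp_in {..<n} w \<Longrightarrow> supnorm w \<le> supnorm (\<Phi> w)"
      "\<And>w. supp_in {..<n} w \<Longrightarrow> supnorm (\<Phi> w) \<le> ext_bound * supnorm w"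
    using extension_linfty_coordinates[OF q(1), of "Gam q - G'"] by blast
  have u_in: "i q (restr (Gam q) v) \<in> \<Phi> ` {w. supp_in {..<n} w}" if "v \<in> B" for v
    unfolding \<Phi>(2) using Y_vanish that BY by (auto simp: supp_in_def restr_def)
  have u_eq: "i q (restr (Gam q) v) \<delta> = v \<delta>" if "\<delta> \<in> D" for v \<delta>
    using that q ext[OF q(1) supp_in_restr] unfolding restr_def by auto
  have u_close: "\<bar>v g - i q (restr (Gam q) v) g\<bar> \<le> \<epsilon>" if "v \<in> B" for v g
    using approx[OF that] by (simp add: abs_minus_commute)
  have \<epsilon>_small: "real (card B) * K * \<epsilon> \<le> 1 / 2"
    unfolding \<epsilon>_def by (rule tolerance_le_half[OF K])
  obtain F where F: "fin_dim_subspace F" "lspan B \<subseteq> F"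
    "F \<subseteq> lspan (B \<union> \<Phi> ` {w. supp_in {..<n} w})" "linfty_iso (4 * ext_bound) F"
    using linfty_iso_perturbation[OF B(1) h K hbd \<Phi>(1)
        \<Phi>(3-5)[OF CollectD[of _ "\<lambda>w. supp_in {..<n} w"]] u_in u_eq u_close \<epsilon>_small]
    by blast
  have "lspan (B \<union> \<Phi> ` {w. supp_in {..<n} w}) \<subseteq> Y"
    using BY ext_complement_subset_Y[OF q(1)] unfolding \<Phi>(2) by (intro lspan_least[OF lin_closed_Y]) auto
  then show "\<exists>F. fin_dim_subspace F \<and> E \<subseteq> F \<and> F \<subseteq> Y \<and> linfty_iso (4 * ext_bound) F"
    using F B(2) by blast
qed

end

theorem proposition1p7:
  fixes Gam :: "nat \<Rightarrow> 'a set"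
    and i :: "nat \<Rightarrow> ('a \<Rightarrow> real) \<Rightarrow> ('a \<Rightarrow> real)"
    and G' :: "'a set"
  assumes fin: "\<And>q. 1 \<le> q \<Longrightarrow> finite (Gam q) \<and> Gam q \<noteq> {}"
    and incr: "\<And>q. 1 \<le> q \<Longrightarrow> Gam q \<subset> Gam (Suc q)"
    and union: "(\<Union>q\<in>{1..}. Gam q) = UNIV"
    and lin: "\<And>q x y a b. 1 \<le> q \<Longrightarrow> supp_in (Gam q) x \<Longrightarrow> supp_in (Gam q) y \<Longrightarrow>
               i q (\<lambda>g. a * x g + b * y g) = (\<lambda>g. a * i q x g + b * i q y g)"
    and ext: "\<And>q x g. 1 \<le> q \<Longrightarrow> supp_in (Gam q) x \<Longrightarrow> g \<in> Gam q \<Longrightarrow> i q x g = x g"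
    and bnd: "\<exists>C. \<forall>q\<ge>1. \<forall>x. supp_in (Gam q) x \<longrightarrow> supnorm (i q x) \<le> C * supnorm x"
    and bddval: "\<And>q x. 1 \<le> q \<Longrightarrow> supp_in (Gam q) x \<Longrightarrow> bounded_fn (i q x)"
    and compat: "\<And>p q x. 1 \<le> p \<Longrightarrow> p < q \<Longrightarrow> supp_in (Gam p) x \<Longrightarrow>
               i p x = i q (restr (Gam q) (i p x))"
    and sd: "self_determined Gam i G'"
  shows "(\<forall>q\<ge>1. i q ` {x. supp_in (Gam q - G') x} = lspan (dvec Gam i ` (Gam q - G')))
         \<and> Linf_space (supclosure (lspan (dvec Gam i ` (UNIV - G'))))"
proof -
  interpret bd_self_determined Gam i G'
    using fin incr union lin ext bnd bddval compat sd
    by (simp add: bd_self_determined_def bd_self_determined_axioms_def bourgain_delbaen_def)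
  show ?thesis using ext_complement_eq_span Linf_space_Y by blast
qed

end
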